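(* Let $G$ be a partial cube and $H$ an isometric subgraph of $G$ isomorphic to the full subdivision of $K_m$ such that (a) no vertex of $G$ is adjacent to all original vertices of $H$, (b) $\mathrm{conv}(H)$ is isomorphic neither to $Q_m^-$ nor to $Q_m^{--}$, and (c) $H$ is inclusion-minimal among isometric subgraphs of $G$ that are full subdivisions of complete graphs and satisfy (a) and (b). Then $\mathrm{conv}(H)$ is isomorphic to a member of $\mathcal Q^-$.
   Context: Partial cube: isometric subgraph of a hypercube. Convex subgraph: contains all shortest paths between its vertices; $\mathrm{conv}(S)$ is the smallest convex subgraph containing $S$. The full subdivision of a graph replaces each edge by a path of length 2; the vertices corresponding to vertices of the original graph are the original vertices. For a vertex $v$ of $Q_n$ with antipodal vertex $-v$: $Q_n^-=Q_n-\{-v\}$; $Q_n^{--}$ is $Q_n$ minus two antipodal vertices; for $n\ge4$, $Q_n^{-*}$ is $Q_n^-$ minus exactly one neighbor of $v$ and $Q_n^{--}(m)$ ($1\le m\le n$) is $Q_n^-$ minus $v$ and $m$ neighbors of $v$. $\mathcal Q^-=\{Q_n^{-*},Q_n^{--}(m)\mid n\ge4,1\le m\le n\}$. *)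

theory Defs
  imports Main
begin

record 'a graph =
  verts :: "'a set"
  arcs :: "('a \<times> 'a) set"

definition graph :: "'a graph \<Rightarrow> bool" where
  "graph G \<longleftrightarrow> arcs G \<subseteq> verts G \<times> verts G
     \<and> (\<forall>u v. (u, v) \<in> arcs G \<longrightarrow> (v, u) \<in> arcs G)
     \<and> (\<forall>u. (u, u) \<notin> arcs G)"

definition walk :: "'a graph \<Rightarrow> 'a list \<Rightarrow> bool" where
  "walk G p \<longleftrightarrow> p \<noteq> [] \<and> set p \<subseteq> verts G
     \<and> (\<forall>i. Suc i < length p \<longrightarrow> (p ! i, p ! Suc i) \<in> arcs G)"

definition walk_betw :: "'a graph \<Rightarrow> 'a \<Rightarrow> 'a list \<Rightarrow> 'a \<Rightarrow> bool" where
  "walk_betw G u p v \<longleftrightarrow> walk G p \<and> hd p = u \<and> last p = v"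

definition connected_graph :: "'a graph \<Rightarrow> bool" where
  "connected_graph G \<longleftrightarrow> (\<forall>u\<in>verts G. \<forall>v\<in>verts G. \<exists>p. walk_betw G u p v)"

definition gdist :: "'a graph \<Rightarrow> 'a \<Rightarrow> 'a \<Rightarrow> nat" where
  "gdist G u v = (LEAST n. \<exists>p. walk_betw G u p v \<and> length p = Suc n)"

definition subgraph :: "'a graph \<Rightarrow> 'a graph \<Rightarrow> bool" where
  "subgraph H G \<longleftrightarrow> graph H \<and> verts H \<subseteq> verts G \<and> arcs H \<subseteq> arcs G"

definition isometric_subgraph :: "'a graph \<Rightarrow> 'a graph \<Rightarrow> bool" where
  "isometric_subgraph H G \<longleftrightarrow> subgraph H G \<and> connected_graph H
     \<and> (\<forall>u\<in>verts H. \<forall>v\<in>verts H. gdist H u v = gdist G u v)"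

definition induced :: "'a graph \<Rightarrow> 'a set \<Rightarrow> 'a graph" where
  "induced G S = \<lparr>verts = S, arcs = arcs G \<inter> (S \<times> S)\<rparr>"

definition isomorphic :: "'a graph \<Rightarrow> 'b graph \<Rightarrow> bool" where
  "isomorphic G H \<longleftrightarrow> (\<exists>f. bij_betw f (verts G) (verts H)
     \<and> (\<forall>u\<in>verts G. \<forall>v\<in>verts G. (u, v) \<in> arcs G \<longleftrightarrow> (f u, f v) \<in> arcs H))"

definition graph_iso :: "('a \<Rightarrow> 'b) \<Rightarrow> 'a graph \<Rightarrow> 'b graph \<Rightarrow> bool" where
  "graph_iso f G H \<longleftrightarrow> bij_betw f (verts G) (verts H)
     \<and> (\<forall>u\<in>verts G. \<forall>v\<in>verts G. (u, v) \<in> arcs G \<longleftrightarrow> (f u, f v) \<in> arcs H)"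

text \<open>The coordinate set
is taken inside the vertex type; this loses no generality, since the number of
coordinates needed (Theta-classes) never exceeds the number of vertices (or is
finite and at most |V|-1).\<close>

definition partial_cube :: "'a graph \<Rightarrow> bool" where
  "partial_cube G \<longleftrightarrow> graph G \<and> connected_graph G \<and>
     (\<exists>f :: 'a \<Rightarrow> 'a set. (\<forall>v\<in>verts G. finite (f v)) \<and>
        (\<forall>u\<in>verts G. \<forall>v\<in>verts G. gdist G u v = card ((f u - f v) \<union> (f v - f u))))"

definition hypercube :: "nat \<Rightarrow> nat set graph" where
  "hypercube n = \<lparr>verts = Pow {0..<n},
     arcs = {(x, y). x \<subseteq> {0..<n} \<and> y \<subseteq> {0..<n} \<and> card ((x - y) \<union> (y - x)) = 1}\<rparr>"

text \<open>Taking v = {} (so -v = {0..<n}); the neighbours of v are the singletons.\<close>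
definition Qminus :: "nat \<Rightarrow> nat set graph" where
  "Qminus n = induced (hypercube n) (Pow {0..<n} - {{0..<n}})"

definition Qminusminus :: "nat \<Rightarrow> nat set graph" where
  "Qminusminus n = induced (hypercube n) (Pow {0..<n} - {{0..<n}, {}})"

text \<open>Q_n^{-*}: Q_n^- minus exactly one neighbour of v (all choices isomorphic).\<close>
definition Qminusstar :: "nat \<Rightarrow> nat set graph" where
  "Qminusstar n = induced (hypercube n) (Pow {0..<n} - {{0..<n}, {0}})"

text \<open>Q_n^{--}(m): Q_n^- minus v and m neighbours of v (all choices isomorphic).\<close>
definition Qminusminus_m :: "nat \<Rightarrow> nat \<Rightarrow> nat set graph" where
  "Qminusminus_m n m = induced (hypercube n)
     (Pow {0..<n} - ({{0..<n}, {}} \<union> {{i} | i. i < m}))"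

definition iso_to_Qminus_family :: "'a graph \<Rightarrow> bool" where
  "iso_to_Qminus_family G \<longleftrightarrow> (\<exists>n\<ge>4. isomorphic G (Qminusstar n)
     \<or> (\<exists>m. 1 \<le> m \<and> m \<le> n \<and> isomorphic G (Qminusminus_m n m)))"

text \<open>Full subdivision of K_m: original vertices Inl i (i < m), subdivision
vertices Inr {i,j} (i \<noteq> j < m), with Inl i adjacent to Inr e iff i \<in> e.\<close>
definition full_subdiv_K :: "nat \<Rightarrow> (nat + nat set) graph" where
  "full_subdiv_K m = \<lparr>verts = Inl ` {0..<m} \<union> Inr ` {{i, j} | i j. i < m \<and> j < m \<and> i \<noteq> j},
     arcs = {(Inl i, Inr e) | i e. i < m \<and> i \<in> e \<and> (\<exists>j<m. j \<noteq> i \<and> e = {i, j})}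
          \<union> {(Inr e, Inl i) | i e. i < m \<and> i \<in> e \<and> (\<exists>j<m. j \<noteq> i \<and> e = {i, j})}\<rparr>"

definition convex_set :: "'a graph \<Rightarrow> 'a set \<Rightarrow> bool" where
  "convex_set G S \<longleftrightarrow> S \<subseteq> verts G \<and>
     (\<forall>u\<in>S. \<forall>v\<in>S. \<forall>p. walk_betw G u p v \<and> length p = Suc (gdist G u v) \<longrightarrow> set p \<subseteq> S)"

definition conv :: "'a graph \<Rightarrow> 'a graph \<Rightarrow> 'a graph" where
  "conv G H = induced G (\<Inter>{S. convex_set G S \<and> verts H \<subseteq> S})"

definition cond_ab :: "'a graph \<Rightarrow> 'a graph \<Rightarrow> nat \<Rightarrow> (nat + nat set \<Rightarrow> 'a) \<Rightarrow> bool" where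
  "cond_ab G H m \<phi> \<longleftrightarrow> graph_iso \<phi> (full_subdiv_K m) H
     \<and> \<not> (\<exists>x\<in>verts G. \<forall>i<m. (x, \<phi> (Inl i)) \<in> arcs G)
     \<and> \<not> isomorphic (conv G H) (Qminus m)
     \<and> \<not> isomorphic (conv G H) (Qminusminus m)"

definition good_subdivision :: "'a graph \<Rightarrow> 'a graph \<Rightarrow> bool" where
  "good_subdivision G H \<longleftrightarrow> isometric_subgraph H G \<and> (\<exists>m \<phi>. cond_ab G H m \<phi>)"

end

theory Submission
  imports Defs
begin

text \<open>Embed \<open>G\<close> isometrically into a hypercube.  In a partial cube the original vertices
\<open>x\<^sub>i\<close> of \<open>H\<close> are pairwise at distance 2 and \<open>x\<^sub>i y\<^sub>i\<^sub>j x\<^sub>j\<close> are geodesics; this forces a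
point \<open>c\<close> of the cube and distinct coordinates \<open>a\<^sub>i\<close> with \<open>x\<^sub>i = c + e\<^sub>a\<^sub>i\<close> and
\<open>y\<^sub>i\<^sub>j = c + e\<^sub>a\<^sub>i + e\<^sub>a\<^sub>j\<close>.  Condition (a) says exactly that \<open>c\<close> is not a vertex of \<open>G\<close>.
The convex hull of \<open>H\<close> is then the set of vertices \<open>c + \<Sum>\<^bsub>i \<in> Y\<^esub> e\<^bsub>a\<^sub>i\<^esub>\<close> of \<open>G\<close>, so it is the
subgraph of \<open>Q\<^sub>m\<close> induced by a family \<open>T\<close> of nonempty subsets \<open>Y\<close> of \<open>{0..<m}\<close>; the
same holds for the restriction of \<open>H\<close> to any \<open>K \<subseteq> {0..<m}\<close>, with \<open>T \<inter> Pow K\<close>.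

For \<open>3 \<le> |K| < m\<close> the restriction is a smaller candidate, so by minimality \<open>T \<inter> Pow K\<close>
induces \<open>Q\<^sub>K\<^sup>-\<close> or \<open>Q\<^sub>K\<^sup>-\<^sup>-\<close>.  A smallest missing \<open>Y\<close> with \<open>|Y| \<le> m - 2\<close> would make
\<open>T \<inter> Pow (Y \<union> {j})\<close> miss both \<open>{}\<close> and \<open>Y\<close>, which is impossible by counting vertices and
because in \<open>Q\<^sub>K\<^sup>-\<^sup>-\<close> every vertex has its complement at distance \<open>|K|\<close>.  Hence \<open>T\<close> misses only
\<open>{}\<close>, possibly \<open>{0..<m}\<close>, and a set of co-singletons; if \<open>{0..<m} \<in> T\<close> at most one
co-singleton is missing, because a geodesic from \<open>{0..<m}\<close> to \<open>{0..<m} - {i, j}\<close> passes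
through one.  The four cases give \<open>Q\<^sub>m\<^sup>-\<close> and \<open>Q\<^sub>m\<^sup>-\<^sup>-\<close>, excluded by (b), \<open>Q\<^sub>m\<^sup>-\<^sup>*\<close> and
\<open>Q\<^sub>m\<^sup>-\<^sup>-(k)\<close>.\<close>

lemma walk_singleton_iff: "walk G [x] \<longleftrightarrow> x \<in> verts G"
  unfolding walk_def by auto

lemma walk_Cons_Cons_iff:
  "walk G (x # y # xs) \<longleftrightarrow> x \<in> verts G \<and> (x, y) \<in> arcs G \<and> walk G (y # xs)"
proof
  assume w: "walk G (x # y # xs)"
  have "(x, y) \<in> arcs G"
    using w unfolding walk_def by (metis Suc_less_eq length_Cons nth_Cons_0 nth_Cons_Suc zero_less_Suc)
  moreover have "walk G (y # xs)" unfolding walk_def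
  proof (intro conjI allI impI)
    show "set (y # xs) \<subseteq> verts G" using w unfolding walk_def by auto
  next
    fix i assume "Suc i < length (y # xs)"
    then have "Suc (Suc i) < length (x # y # xs)" by simp
    then have "((x # y # xs) ! Suc i, (x # y # xs) ! Suc (Suc i)) \<in> arcs G"
      using w unfolding walk_def by blast
    then show "((y # xs) ! i, (y # xs) ! Suc i) \<in> arcs G" by simp
  qed simp
  ultimately show "x \<in> verts G \<and> (x, y) \<in> arcs G \<and> walk G (y # xs)"
    using w unfolding walk_def by auto
next
  assume a: "x \<in> verts G \<and> (x, y) \<in> arcs G \<and> walk G (y # xs)"
  show "walk G (x # y # xs)" unfolding walk_def
  proof (intro conjI allI impI)
    show "set (x # y # xs) \<subseteq> verts G" using a unfolding walk_def by auto
  next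
    fix i assume "Suc i < length (x # y # xs)"
    then show "((x # y # xs) ! i, (x # y # xs) ! Suc i) \<in> arcs G"
      using a unfolding walk_def by (cases i) auto
  qed simp
qed

lemma walk_snoc:
  assumes "walk G xs" "(last xs, y) \<in> arcs G" "y \<in> verts G"
  shows "walk G (xs @ [y])"
  using assms unfolding walk_def
proof (intro conjI allI impI)
  fix i assume w: "xs \<noteq> [] \<and> set xs \<subseteq> verts G \<and> (\<forall>i. Suc i < length xs \<longrightarrow> (xs ! i, xs ! Suc i) \<in> arcs G)"
    and i: "Suc i < length (xs @ [y])"
  show "((xs @ [y]) ! i, (xs @ [y]) ! Suc i) \<in> arcs G"
  proof (cases "Suc i < length xs")
    case True then show ?thesis using w by (simp add: nth_append)
  next
    case False
    then have "Suc i = length xs" using i by simp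
    moreover have "i = length xs - 1" using calculation by simp
    ultimately show ?thesis using w assms(2) by (simp add: nth_append last_conv_nth)
  qed
qed auto

lemma walk_take: "walk G p \<Longrightarrow> walk G (take (Suc i) p)"
  unfolding walk_def by (auto dest: in_set_takeD)

lemma walk_drop: "walk G p \<Longrightarrow> i < length p \<Longrightarrow> walk G (drop i p)"
  unfolding walk_def by (auto dest: in_set_dropD)

lemma walk_append: "walk G p \<Longrightarrow> walk G q \<Longrightarrow> last p = hd q \<Longrightarrow> walk G (p @ tl q)"
proof (induction p rule: induct_list012)
  case 1 then show ?case unfolding walk_def by simp
next
  case (2 x) then show ?case by (cases q) auto
next
  case (3 x y zs)
  then have "walk G ((y # zs) @ tl q)" "x \<in> verts G" "(x, y) \<in> arcs G"
    by (auto simp: walk_Cons_Cons_iff)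
  then show ?case by (simp add: walk_Cons_Cons_iff)
qed

lemma walk_betw_append:
  assumes "walk_betw G u p v" "walk_betw G v q w"
  shows "walk_betw G u (p @ tl q) w \<and> length (p @ tl q) = length p + length q - 1"
proof -
  have pq: "p \<noteq> []" "q \<noteq> []" using assms unfolding walk_betw_def walk_def by auto
  have "walk G (p @ tl q)" using assms by (intro walk_append) (auto simp: walk_betw_def)
  then show ?thesis using assms pq unfolding walk_betw_def by (cases q) (auto simp: last_append)
qed

lemma walk_rev: "graph G \<Longrightarrow> walk G p \<Longrightarrow> walk G (rev p)"
proof (induction p rule: induct_list012)
  case (3 x y zs)
  then have "walk G (rev (y # zs))" "x \<in> verts G" "(y, x) \<in> arcs G"
    unfolding graph_def by (auto simp: walk_Cons_Cons_iff)
  then show ?case using walk_snoc by fastforce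
qed simp_all

lemma walk_betw_rev: "graph G \<Longrightarrow> walk_betw G u p v \<Longrightarrow> walk_betw G v (rev p) u"
  unfolding walk_betw_def using walk_rev by (metis hd_rev last_rev)

lemma walk_mono: "verts A \<subseteq> verts B \<Longrightarrow> arcs A \<subseteq> arcs B \<Longrightarrow> walk A p \<Longrightarrow> walk B p"
  unfolding walk_def by auto

lemma gdist_le_walk_length: "walk_betw G u p v \<Longrightarrow> gdist G u v \<le> length p - 1"
  unfolding gdist_def
proof (rule Least_le)
  assume w: "walk_betw G u p v"
  then have "length p = Suc (length p - 1)" unfolding walk_betw_def walk_def by simp
  then show "\<exists>q. walk_betw G u q v \<and> length q = Suc (length p - 1)" using w by blast
qed

lemma shortest_walk_exists:
  assumes "connected_graph G" "u \<in> verts G" "v \<in> verts G"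
  shows "\<exists>p. walk_betw G u p v \<and> length p = Suc (gdist G u v)"
proof -
  obtain p where p: "walk_betw G u p v" using assms unfolding connected_graph_def by blast
  then have "length p = Suc (length p - 1)" unfolding walk_betw_def walk_def by simp
  then have "\<exists>n p. walk_betw G u p v \<and> length p = Suc n" using p by blast
  then show ?thesis unfolding gdist_def by (rule LeastI_ex)
qed

lemma gdist_1_imp_arc:
  assumes "connected_graph G" "u \<in> verts G" "v \<in> verts G" "gdist G u v = 1"
  shows "(u, v) \<in> arcs G"
proof -
  obtain p where p: "walk_betw G u p v" "length p = 2" using shortest_walk_exists[OF assms(1-3)] assms(4) by auto
  then obtain a b where "p = [a, b]" by (metis One_nat_def Suc_1 length_0_conv length_Suc_conv)
  then show ?thesis using p unfolding walk_betw_def by (auto simp add: walk_Cons_Cons_iff)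
qed

lemma second_vertex_of_walk:
  assumes "walk_betw G u p v" "2 \<le> length p"
  shows "(u, p ! 1) \<in> arcs G" "p ! 1 \<in> set p"
proof -
  have "p \<noteq> []" using assms(2) by auto
  then have "p ! 0 = u" using assms(1) unfolding walk_betw_def by (simp add: hd_conv_nth)
  then show "(u, p ! 1) \<in> arcs G" using assms unfolding walk_betw_def walk_def by force
  show "p ! 1 \<in> set p" using assms by simp
qed

lemma graph_induced: "graph G \<Longrightarrow> graph (induced G S)"
  unfolding graph_def induced_def by auto

lemma induced_verts [simp]: "verts (induced G S) = S"
  unfolding induced_def by simp

lemma graph_iso_isomorphic: "graph_iso h A B \<Longrightarrow> isomorphic A B"
  unfolding graph_iso_def isomorphic_def by blast

lemma isomorphic_graph_iso: "isomorphic A B \<Longrightarrow> \<exists>h. graph_iso h A B"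
  unfolding graph_iso_def isomorphic_def by blast

lemma graph_iso_inv: "graph_iso h A B \<Longrightarrow> graph_iso (the_inv_into (verts A) h) B A"
proof -
  assume g: "graph_iso h A B"
  then have b: "bij_betw h (verts A) (verts B)" unfolding graph_iso_def by simp
  let ?k = "the_inv_into (verts A) h"
  have bk: "bij_betw ?k (verts B) (verts A)" using b by (rule bij_betw_the_inv_into)
  have "(u, v) \<in> arcs B \<longleftrightarrow> (?k u, ?k v) \<in> arcs A" if uv: "u \<in> verts B" "v \<in> verts B" for u v
  proof -
    have "?k u \<in> verts A" "?k v \<in> verts A" using bk uv by (auto simp: bij_betw_def)
    moreover have "h (?k u) = u" "h (?k v) = v" using b uv by (auto simp: bij_betw_def f_the_inv_into_f)
    ultimately show ?thesis using g unfolding graph_iso_def by metis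
  qed
  then show ?thesis using bk unfolding graph_iso_def by simp
qed

lemma graph_iso_comp: "graph_iso h A B \<Longrightarrow> graph_iso k B C \<Longrightarrow> graph_iso (k \<circ> h) A C"
  unfolding graph_iso_def
proof (elim conjE, intro conjI ballI)
  assume b: "bij_betw h (verts A) (verts B)" "bij_betw k (verts B) (verts C)"
    and a: "\<forall>u\<in>verts A. \<forall>v\<in>verts A. (u, v) \<in> arcs A \<longleftrightarrow> (h u, h v) \<in> arcs B"
      "\<forall>u\<in>verts B. \<forall>v\<in>verts B. (u, v) \<in> arcs B \<longleftrightarrow> (k u, k v) \<in> arcs C"
  show "bij_betw (k \<circ> h) (verts A) (verts C)" using b by (rule bij_betw_trans)
  fix u v assume "u \<in> verts A" "v \<in> verts A"
  moreover have "h u \<in> verts B" "h v \<in> verts B" using b(1) calculation by (auto simp: bij_betw_def)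
  ultimately show "(u, v) \<in> arcs A \<longleftrightarrow> ((k \<circ> h) u, (k \<circ> h) v) \<in> arcs C" using a by simp
qed

lemma isomorphic_refl: "isomorphic A A"
  unfolding isomorphic_def by (intro exI[of _ id]) auto

lemma isomorphic_sym: "isomorphic A B \<Longrightarrow> isomorphic B A"
  using graph_iso_inv isomorphic_graph_iso graph_iso_isomorphic by metis

lemma isomorphic_trans: "isomorphic A B \<Longrightarrow> isomorphic B C \<Longrightarrow> isomorphic A C"
  using graph_iso_comp isomorphic_graph_iso graph_iso_isomorphic by metis

lemma isomorphic_card_verts: "isomorphic A B \<Longrightarrow> card (verts A) = card (verts B)"
  unfolding isomorphic_def using bij_betw_same_card by blast

lemma graph_iso_walk: "graph_iso h A B \<Longrightarrow> walk A p \<Longrightarrow> walk B (map h p)"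
proof -
  assume g: "graph_iso h A B" and w: "walk A p"
  have b: "bij_betw h (verts A) (verts B)" using g unfolding graph_iso_def by simp
  show ?thesis unfolding walk_def
  proof (intro conjI allI impI)
    show "map h p \<noteq> []" using w unfolding walk_def by simp
    show "set (map h p) \<subseteq> verts B" using w b unfolding walk_def bij_betw_def by auto
  next
    fix i assume i: "Suc i < length (map h p)"
    then have "(p ! i, p ! Suc i) \<in> arcs A" "p ! i \<in> verts A" "p ! Suc i \<in> verts A"
      using w unfolding walk_def by auto
    then show "(map h p ! i, map h p ! Suc i) \<in> arcs B" using g i unfolding graph_iso_def by auto
  qed
qed

lemma graph_iso_walk_betw:
  "graph_iso h A B \<Longrightarrow> walk_betw A u p v \<Longrightarrow> walk_betw B (h u) (map h p) (h v)"
  unfolding walk_betw_def using graph_iso_walk by (metis hd_map last_map walk_def)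

definition symdiff :: "'b set \<Rightarrow> 'b set \<Rightarrow> 'b set" where
  "symdiff A B = (A - B) \<union> (B - A)"

lemma symdiff_commute: "symdiff A B = symdiff B A"
  unfolding symdiff_def by auto

lemma symdiff_assoc: "symdiff (symdiff A B) C = symdiff A (symdiff B C)"
  unfolding symdiff_def by auto

lemma symdiff_self [simp]: "symdiff A A = {}"
  unfolding symdiff_def by auto

lemma symdiff_cancel_left: "symdiff (symdiff D A) (symdiff D B) = symdiff A B"
  unfolding symdiff_def by auto

lemma symdiff_cancel_right: "symdiff (symdiff D A) D = A"
  unfolding symdiff_def by auto

lemma symdiff_symdiff_self [simp]: "symdiff D (symdiff D A) = A"
  unfolding symdiff_def by auto

lemma symdiff_eq_iff: "symdiff Y D = S \<longleftrightarrow> Y = symdiff D S"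
  unfolding symdiff_def by auto

lemma symdiff_eq_empty_iff: "symdiff A B = {} \<longleftrightarrow> A = B"
  unfolding symdiff_def by auto

lemma finite_symdiff: "finite A \<Longrightarrow> finite B \<Longrightarrow> finite (symdiff A B)"
  unfolding symdiff_def by auto

lemma symdiff_Diff_Diff: "x \<subseteq> F \<Longrightarrow> y \<subseteq> F \<Longrightarrow> symdiff (F - x) (F - y) = symdiff x y"
  unfolding symdiff_def by auto

lemma card_symdiff_triangle:
  assumes "finite A" "finite B" "finite C"
  shows "card (symdiff A C) \<le> card (symdiff A B) + card (symdiff B C)"
proof -
  have "symdiff A C \<subseteq> symdiff A B \<union> symdiff B C" unfolding symdiff_def by auto
  then have "card (symdiff A C) \<le> card (symdiff A B \<union> symdiff B C)"
    using assms by (intro card_mono) (auto simp: symdiff_def)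
  also have "\<dots> \<le> card (symdiff A B) + card (symdiff B C)" by (rule card_Un_le)
  finally show ?thesis .
qed

lemma card_symdiff_additive_imp_between:
  assumes "finite A" "finite B" "finite C"
    and le: "card (symdiff A B) + card (symdiff B C) \<le> card (symdiff A C)"
  shows "A \<inter> C \<subseteq> B \<and> B \<subseteq> A \<union> C"
proof -
  have fin: "finite (symdiff A B)" "finite (symdiff B C)"
    using assms by (auto simp: symdiff_def)
  have "symdiff A C \<subseteq> symdiff A B \<union> symdiff B C" unfolding symdiff_def by auto
  then have "card (symdiff A C) \<le> card (symdiff A B \<union> symdiff B C)" using fin by (intro card_mono) auto
  also have "\<dots> = card (symdiff A B) + card (symdiff B C) - card (symdiff A B \<inter> symdiff B C)"
    using card_Un_Int[OF fin] by simp
  finally have "card (symdiff A C) \<le> card (symdiff A B) + card (symdiff B C) - card (symdiff A B \<inter> symdiff B C)" .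
  moreover have "card (symdiff A B \<inter> symdiff B C) \<le> card (symdiff A B)"
    using fin by (intro card_mono) auto
  ultimately have "card (symdiff A B \<inter> symdiff B C) = 0" using le by linarith
  then have "symdiff A B \<inter> symdiff B C = {}" using fin by simp
  then show ?thesis unfolding symdiff_def by blast
qed

lemma between_symdiff_shift:
  "A \<inter> C \<subseteq> B \<Longrightarrow> B \<subseteq> A \<union> C \<Longrightarrow>
    symdiff A D \<inter> symdiff C D \<subseteq> symdiff B D \<and> symdiff B D \<subseteq> symdiff A D \<union> symdiff C D"
  unfolding symdiff_def by auto

lemma symdiff_image: "inj_on \<pi> (x \<union> y) \<Longrightarrow> symdiff (\<pi> ` x) (\<pi> ` y) = \<pi> ` (symdiff x y)"
  unfolding symdiff_def inj_on_def by auto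

lemma card_symdiff_image:
  assumes "inj_on \<pi> A" "x \<subseteq> A" "y \<subseteq> A"
  shows "card (symdiff (\<pi> ` x) (\<pi> ` y)) = card (symdiff x y)"
proof -
  have i: "inj_on \<pi> (x \<union> y)" using assms by (meson inj_on_subset le_sup_iff)
  then have "inj_on \<pi> (symdiff x y)" by (rule inj_on_subset) (auto simp: symdiff_def)
  then show ?thesis using symdiff_image[OF i] by (simp add: card_image)
qed

lemma card_symdiff_singleton_eq_1:
  assumes "card (symdiff Z {e}) = 1"
  shows "finite Z" "e \<in> Z \<Longrightarrow> card Z = 2" "e \<notin> Z \<Longrightarrow> Z = {}"
proof -
  show fZ: "finite Z"
  proof (rule ccontr)
    assume "infinite Z"
    then have "infinite (symdiff Z {e})" unfolding symdiff_def by (simp add: infinite_Un)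
    then show False using assms by simp
  qed
  show "card Z = 2" if "e \<in> Z"
  proof -
    have "symdiff Z {e} = Z - {e}" using that unfolding symdiff_def by auto
    then show ?thesis using assms fZ that by (simp add: card_Diff_singleton)
  qed
  show "Z = {}" if "e \<notin> Z"
  proof -
    have "symdiff Z {e} = insert e Z" using that unfolding symdiff_def by auto
    then show ?thesis using assms fZ that by simp
  qed
qed

lemma symdiff_adjacent_three_singletons:
  assumes "card (symdiff Z {p}) = 1" "card (symdiff Z {q}) = 1" "card (symdiff Z {r}) = 1"
    and "p \<noteq> q" "p \<noteq> r" "q \<noteq> r"
  shows "Z = {}"
proof (cases "p \<in> Z")
  case True
  then have "card Z = 2" using card_symdiff_singleton_eq_1(2)[OF assms(1)] by simp
  moreover have "q \<in> Z" "r \<in> Z"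
    using card_symdiff_singleton_eq_1(3)[OF assms(2)] card_symdiff_singleton_eq_1(3)[OF assms(3)] True
    by auto
  ultimately have "{p, q, r} \<subseteq> Z" "finite Z" using True card.infinite by fastforce+
  then show ?thesis using card_mono[of Z "{p, q, r}"] \<open>card Z = 2\<close> assms(4-6) by simp
next
  case False
  then show ?thesis using card_symdiff_singleton_eq_1(3)[OF assms(1)] by simp
qed

lemma two_sets_common_corner:
  assumes P: "card P = 2" and Q: "card Q = 2" and PQ: "card (symdiff P Q) = 2"
    and Ys: "card Ys = 1" and YP: "card (symdiff Ys P) = 1" and YQ: "card (symdiff Ys Q) \<noteq> 1"
    and Zs: "card Zs = 1" and ZQ: "card (symdiff Zs Q) = 1" and ZP: "card (symdiff Zs P) \<noteq> 1"
  shows "symdiff P Ys = symdiff Q Zs \<and> card (symdiff P Ys) = 1"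
proof -
  obtain s where s: "Ys = {s}" using Ys card_1_singletonE by blast
  obtain t where t: "Zs = {t}" using Zs card_1_singletonE by blast
  have fP: "finite P" and fQ: "finite Q" using P Q card.infinite by fastforce+
  have YP': "card (symdiff P {s}) = 1" and ZQ': "card (symdiff Q {t}) = 1"
    using YP ZQ s t by (simp_all add: symdiff_commute)
  have sP: "s \<in> P" using card_symdiff_singleton_eq_1(3)[OF YP'] P by force
  have tQ: "t \<in> Q" using card_symdiff_singleton_eq_1(3)[OF ZQ'] Q by force
  have sQ: "s \<notin> Q"
  proof
    assume "s \<in> Q"
    then have "symdiff Ys Q = Q - {s}" using s unfolding symdiff_def by auto
    then show False using YQ \<open>s \<in> Q\<close> Q fQ by simp
  qed
  have tP: "t \<notin> P"
  proof
    assume "t \<in> P"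
    then have "symdiff Zs P = P - {t}" using t unfolding symdiff_def by auto
    then show False using ZP \<open>t \<in> P\<close> P fP by simp
  qed
  obtain p where p: "P - {s} = {p}" using P sP fP card_1_singletonE[of "P - {s}"] by auto
  obtain q where q: "Q - {t} = {q}" using Q tQ fQ card_1_singletonE[of "Q - {t}"] by auto
  have pp: "P = {s, p}" "s \<noteq> p" and qq: "Q = {t, q}" "t \<noteq> q" using sP tQ p q by auto
  have "p = q"
  proof (rule ccontr)
    assume "p \<noteq> q"
    then have "symdiff P Q = {s, p, t, q}" "card {s, p, t, q} = 4"
      using pp qq sQ tP unfolding symdiff_def by auto
    then show False using PQ by simp
  qed
  moreover have "symdiff P Ys = {p}" "symdiff Q Zs = {q}"
    using pp qq s t unfolding symdiff_def by auto
  ultimately show ?thesis by simp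
qed

text \<open>The squares on \<open>D\<^sub>i, Y, D\<^sub>j\<close> and on \<open>D\<^sub>i, Z, D\<^sub>k\<close> have the same fourth corner; translating by
\<open>D\<^sub>i\<close> reduces this to the previous lemma.\<close>

lemma square_corners_agree:
  assumes "card (symdiff Di Dj) = 2" "card (symdiff Di Dk) = 2" "card (symdiff Dj Dk) = 2"
    "card (symdiff Y Di) = 1" "card (symdiff Y Dj) = 1" "card (symdiff Y Dk) \<noteq> 1"
    "card (symdiff Z Di) = 1" "card (symdiff Z Dk) = 1" "card (symdiff Z Dj) \<noteq> 1"
  shows "symdiff (symdiff Di Dj) Y = symdiff (symdiff Di Dk) Z
    \<and> card (symdiff (symdiff (symdiff Di Dj) Y) Di) = 1"
proof -
  define P Q Ys Zs where "P = symdiff Di Dj" and "Q = symdiff Di Dk"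
    and "Ys = symdiff Di Y" and "Zs = symdiff Di Z"
  have Dj: "Dj = symdiff Di P" and Dk: "Dk = symdiff Di Q" and Y: "Y = symdiff Di Ys"
    and Z: "Z = symdiff Di Zs"
    unfolding P_def Q_def Ys_def Zs_def by simp_all
  have "symdiff P Ys = symdiff Q Zs \<and> card (symdiff P Ys) = 1"
  proof (rule two_sets_common_corner)
    show "card P = 2" "card Q = 2" using assms(1,2) P_def Q_def by simp_all
    show "card (symdiff P Q) = 2" using assms(3) Dj Dk symdiff_cancel_left by metis
    show "card Ys = 1" "card Zs = 1"
      using assms(4,7) Y Z by (simp_all add: symdiff_commute symdiff_cancel_right)
    show "card (symdiff Ys P) = 1" "card (symdiff Ys Q) \<noteq> 1"
      using assms(5,6) Y Dj Dk symdiff_cancel_left by metis+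
    show "card (symdiff Zs Q) = 1" "card (symdiff Zs P) \<noteq> 1"
      using assms(8,9) Z Dj Dk symdiff_cancel_left by metis+
  qed
  moreover have e: "symdiff (symdiff Di Dj) Y = symdiff Di (symdiff P Ys)"
    "symdiff (symdiff Di Dk) Z = symdiff Di (symdiff Q Zs)"
    unfolding P_def Q_def Y Z symdiff_def by auto
  moreover have "symdiff (symdiff (symdiff Di Dj) Y) Di = symdiff P Ys"
    unfolding e by (simp add: symdiff_commute[of _ Di])
  ultimately show ?thesis by metis
qed

section \<open>Subgraphs of hypercubes\<close>

lemma induced_hypercube_arcs_iff:
  "(x, y) \<in> arcs (induced (hypercube n) T) \<longleftrightarrow>
    x \<in> T \<and> y \<in> T \<and> x \<subseteq> {0..<n} \<and> y \<subseteq> {0..<n} \<and> card (symdiff x y) = 1"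
  unfolding induced_def hypercube_def symdiff_def by auto

lemma induced_hypercube_walk_card_symdiff_le:
  "T \<subseteq> Pow {0..<n} \<Longrightarrow> walk (induced (hypercube n) T) p \<Longrightarrow>
    card (symdiff (hd p) (last p)) \<le> length p - 1"
proof (induction p rule: induct_list012)
  case 1 then show ?case unfolding walk_def by simp
next
  case (2 x) then show ?case by simp
next
  case (3 x y zs)
  have w: "walk (induced (hypercube n) T) (y # zs)" and a: "(x, y) \<in> arcs (induced (hypercube n) T)"
    using 3(4) by (auto simp: walk_Cons_Cons_iff)
  have ih: "card (symdiff y (last (y # zs))) \<le> length zs" using 3(2)[OF 3(3) w] by simp
  have xy: "card (symdiff x y) = 1" using a by (simp add: induced_hypercube_arcs_iff)
  have "last (y # zs) \<in> T" using w unfolding walk_def by auto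
  then have "finite (last (y # zs))" using 3(3) by (meson PowD finite_atLeastLessThan finite_subset subsetD)
  then have fin: "finite x" "finite y" "finite (last (y # zs))"
    using a by (auto simp: induced_hypercube_arcs_iff intro: finite_subset)
  have "card (symdiff x (last (y # zs))) \<le> card (symdiff x y) + card (symdiff y (last (y # zs)))"
    by (rule card_symdiff_triangle[OF fin])
  then show ?case using ih xy by simp
qed

lemma induced_hypercube_iso:
  assumes T: "T \<subseteq> Pow {0..<n}" and T': "T' \<subseteq> Pow {0..<n'}" and b: "bij_betw h T T'"
    and d: "\<And>x y. x \<in> T \<Longrightarrow> y \<in> T \<Longrightarrow> card (symdiff (h x) (h y)) = card (symdiff x y)"
  shows "graph_iso h (induced (hypercube n) T) (induced (hypercube n') T')"
  unfolding graph_iso_def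
proof (intro conjI ballI)
  show "bij_betw h (verts (induced (hypercube n) T)) (verts (induced (hypercube n') T'))"
    using b by simp
  fix u v assume "u \<in> verts (induced (hypercube n) T)" "v \<in> verts (induced (hypercube n) T)"
  then have uv: "u \<in> T" "v \<in> T" by auto
  then have "h u \<in> T'" "h v \<in> T'" using b by (auto simp: bij_betw_def)
  then show "(u, v) \<in> arcs (induced (hypercube n) T) \<longleftrightarrow> (h u, h v) \<in> arcs (induced (hypercube n') T')"
    using uv T T' d[OF uv] by (auto simp: induced_hypercube_arcs_iff)
qed

lemma card_verts_Qminus: "card (verts (Qminus k)) = 2 ^ k - 1"
  unfolding Qminus_def by (simp add: card_Diff_singleton card_Pow)

lemma card_verts_Qminusminus: "1 \<le> k \<Longrightarrow> card (verts (Qminusminus k)) = 2 ^ k - 2"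
proof -
  assume "1 \<le> k"
  then have "{0..<k} \<noteq> ({}::nat set)" by auto
  moreover have "card (Pow {0..<k} - {{0..<k}, {}}) = card (Pow {0..<k}) - card {{0..<k}, ({}::nat set)}"
    by (rule card_Diff_subset) auto
  ultimately show ?thesis unfolding Qminusminus_def by (simp add: card_Pow)
qed

lemma Qminusminus_antipode_far:
  assumes "u \<in> verts (Qminusminus k)"
  shows "{0..<k} - u \<in> verts (Qminusminus k)"
    and "walk_betw (Qminusminus k) u p ({0..<k} - u) \<Longrightarrow> k < length p"
proof -
  have us: "u \<subseteq> {0..<k}" "u \<noteq> {}" "u \<noteq> {0..<k}" using assms unfolding Qminusminus_def by auto
  then show "{0..<k} - u \<in> verts (Qminusminus k)" unfolding Qminusminus_def by auto
  assume p: "walk_betw (Qminusminus k) u p ({0..<k} - u)"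
  have "card (symdiff (hd p) (last p)) \<le> length p - 1"
    using induced_hypercube_walk_card_symdiff_le[of "Pow {0..<k} - {{0..<k}, {}}" k p] p
    unfolding walk_betw_def Qminusminus_def by auto
  moreover have "symdiff (hd p) (last p) = {0..<k}" using p us unfolding walk_betw_def symdiff_def by auto
  moreover have "p \<noteq> []" using p unfolding walk_betw_def walk_def by simp
  ultimately show "k < length p" by (cases p) auto
qed

lemma walk_up_from_singleton:
  assumes K: "K \<subseteq> {0..<n}" and j: "j \<in> K" and V: "{X. j \<in> X \<and> X \<subseteq> K} \<subseteq> V"
  shows "finite Z \<Longrightarrow> Z \<subseteq> K - {j} \<Longrightarrow>
    \<exists>p. walk_betw (induced (hypercube n) V) {j} p (insert j Z) \<and> length p = Suc (card Z)"
proof (induction Z rule: finite_induct)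
  case empty
  have "{j} \<in> V" using V j by auto
  then show ?case unfolding walk_betw_def by (intro exI[of _ "[{j}]"]) (auto simp: walk_singleton_iff)
next
  case (insert z Z)
  obtain p where p: "walk_betw (induced (hypercube n) V) {j} p (insert j Z)" "length p = Suc (card Z)"
    using insert by auto
  have mem: "insert j Z \<in> V" "insert j (insert z Z) \<in> V" using V insert j by auto
  have sub: "insert j Z \<subseteq> {0..<n}" "insert j (insert z Z) \<subseteq> {0..<n}" using insert K j by auto
  have "symdiff (insert j Z) (insert j (insert z Z)) = {z}" using insert unfolding symdiff_def by auto
  then have "(insert j Z, insert j (insert z Z)) \<in> arcs (induced (hypercube n) V)"
    using mem sub by (simp add: induced_hypercube_arcs_iff)
  moreover have "walk (induced (hypercube n) V) p" "last p = insert j Z" "hd p = {j}" "p \<noteq> []"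
    using p unfolding walk_betw_def walk_def by auto
  ultimately have "walk_betw (induced (hypercube n) V) {j} (p @ [insert j (insert z Z)]) (insert j (insert z Z))"
    using mem unfolding walk_betw_def by (auto intro: walk_snoc)
  moreover have "length (p @ [insert j (insert z Z)]) = Suc (card (insert z Z))" using p insert by simp
  ultimately show ?case by blast
qed

lemma walk_from_singleton_short:
  assumes K: "K \<subseteq> {0..<n}" and j: "j \<in> K" and w: "w \<in> Pow K - {{}, K - {j}}"
  shows "\<exists>p. walk_betw (induced (hypercube n) (Pow K - {{}, K - {j}})) {j} p w \<and> length p \<le> card K"
proof -
  let ?V = "Pow K - {{}, K - {j}}"
  have fK: "finite K" using K finite_subset by blast
  have fw: "finite w" using w fK finite_subset by auto
  have V: "{X. j \<in> X \<and> X \<subseteq> K} \<subseteq> ?V" by auto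
  show ?thesis
  proof (cases "j \<in> w")
    case True
    obtain p where p: "walk_betw (induced (hypercube n) ?V) {j} p (insert j (w - {j}))"
      "length p = Suc (card (w - {j}))"
      using walk_up_from_singleton[OF K j V, of "w - {j}"] w fw by auto
    have "card (w - {j}) < card w" using card_Diff1_less[OF fw True] .
    also have "card w \<le> card K" using w fK by (intro card_mono) auto
    finally show ?thesis using p True by (auto simp: insert_absorb)
  next
    case False
    have ws: "w \<subseteq> K - {j}" using w False by auto
    obtain p where p: "walk_betw (induced (hypercube n) ?V) {j} p (insert j w)" "length p = Suc (card w)"
      using walk_up_from_singleton[OF K j V fw ws] by auto
    have wmem: "w \<in> ?V" "insert j w \<in> ?V" using w j ws by auto
    have "symdiff (insert j w) w = {j}" using False unfolding symdiff_def by auto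
    moreover have "insert j w \<subseteq> {0..<n}" "w \<subseteq> {0..<n}" using K j ws by auto
    ultimately have "(insert j w, w) \<in> arcs (induced (hypercube n) ?V)"
      using wmem by (simp add: induced_hypercube_arcs_iff)
    moreover have "walk (induced (hypercube n) ?V) p" "last p = insert j w" "hd p = {j}" "p \<noteq> []"
      using p unfolding walk_betw_def walk_def by auto
    ultimately have "walk_betw (induced (hypercube n) ?V) {j} (p @ [w]) w"
      using wmem unfolding walk_betw_def by (auto intro: walk_snoc)
    moreover have "card w < card (K - {j})"
      using ws w fK by (intro psubset_card_mono) auto
    ultimately show ?thesis using p j fK by (intro exI[of _ "p @ [w]"]) auto
  qed
qed

text \<open>The first claim is a vertex count; for the second, the vertex \<open>{j}\<close> would need an antipode
at distance \<open>|K|\<close>.\<close>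

lemma cube_subset_missing_cosingleton:
  assumes K: "K \<subseteq> {0..<n}" "2 \<le> card K" and j: "j \<in> K"
    and S: "S \<subseteq> Pow K - {{}, K - {j}}"
  shows "\<not> isomorphic (induced (hypercube n) S) (Qminus (card K))"
    and "\<not> isomorphic (induced (hypercube n) S) (Qminusminus (card K))"
proof -
  let ?V = "Pow K - {{}, K - {j}}"
  have fK: "finite K" using K finite_subset by blast
  have "card (K - {j}) = card K - 1" using j fK by simp
  then have "1 \<le> card (K - {j})" using K(2) by simp
  then have "K - {j} \<noteq> {}" by (metis card.empty not_one_le_zero)
  then have cV: "card ?V = 2 ^ card K - 2" using fK by (subst card_Diff_subset) (auto simp: card_Pow)
  have fV: "finite ?V" using fK by simp
  have cS: "card S \<le> 2 ^ card K - 2" using card_mono[OF fV S] cV by simp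
  have pos: "2 ^ card K \<ge> (4::nat)" using K power_increasing[of 2 "card K" "2::nat"] by simp
  show "\<not> isomorphic (induced (hypercube n) S) (Qminus (card K))"
    using isomorphic_card_verts card_verts_Qminus cS pos by fastforce
  show "\<not> isomorphic (induced (hypercube n) S) (Qminusminus (card K))"
  proof
    assume i: "isomorphic (induced (hypercube n) S) (Qminusminus (card K))"
    then have "card S = card ?V" using isomorphic_card_verts card_verts_Qminusminus K cV by fastforce
    then have "S = ?V" using card_subset_eq[OF fV S] by simp
    then obtain h where h: "graph_iso h (induced (hypercube n) ?V) (Qminusminus (card K))"
      using i isomorphic_graph_iso by metis
    have ju: "{j} \<in> ?V" using j \<open>K - {j} \<noteq> {}\<close> by auto
    then have hj: "h {j} \<in> verts (Qminusminus (card K))" using h unfolding graph_iso_def bij_betw_def by auto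
    have "{0..<card K} - h {j} \<in> h ` ?V"
      using h Qminusminus_antipode_far(1)[OF hj] unfolding graph_iso_def bij_betw_def by simp
    then obtain w where w: "w \<in> ?V" "h w = {0..<card K} - h {j}" by (metis imageE)
    obtain p where "walk_betw (induced (hypercube n) ?V) {j} p w" "length p \<le> card K"
      using walk_from_singleton_short[OF K(1) j w(1)] by blast
    then show False using graph_iso_walk_betw[OF h] Qminusminus_antipode_far(2)[OF hj] w(2) by fastforce
  qed
qed

text \<open>Complementation followed by a permutation of the coordinates is an automorphism
of the cube; it is how the missing vertices are moved into the normal forms of
\<open>Q\<^sub>m\<^sup>-\<close>, \<open>Q\<^sub>m\<^sup>-\<^sup>*\<close> and \<open>Q\<^sub>m\<^sup>-\<^sup>-(k)\<close>.\<close>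

lemma complement_permute_inj:
  assumes "bij_betw \<pi> {0..<m} {0..<m}"
  shows "inj_on (\<lambda>X. \<pi> ` ({0..<m} - X)) (Pow {0..<m})"
proof (rule inj_onI)
  fix X Y assume XY: "X \<in> Pow {0..<m}" "Y \<in> Pow {0..<m}" "\<pi> ` ({0..<m} - X) = \<pi> ` ({0..<m} - Y)"
  then have "{0..<m} - X = {0..<m} - Y"
    using assms unfolding bij_betw_def by (meson Diff_subset inj_on_image_eq_iff)
  then show "X = Y" using XY by auto
qed

lemma complement_permute_surj:
  assumes p: "bij_betw \<pi> {0..<m} {0..<m}"
  shows "(\<lambda>X. \<pi> ` ({0..<m} - X)) ` Pow {0..<m} = Pow {0..<m}"
proof
  have inj: "inj_on \<pi> {0..<m}" and im: "\<pi> ` {0..<m} = {0..<m}" using p unfolding bij_betw_def by auto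
  show "(\<lambda>X. \<pi> ` ({0..<m} - X)) ` Pow {0..<m} \<subseteq> Pow {0..<m}" using im by auto
  show "Pow {0..<m} \<subseteq> (\<lambda>X. \<pi> ` ({0..<m} - X)) ` Pow {0..<m}"
  proof
    fix Z assume Z: "Z \<in> Pow {0..<m}"
    let ?\<rho> = "the_inv_into {0..<m} \<pi>"
    have "?\<rho> ` Z \<subseteq> {0..<m}" using Z p by (metis PowD bij_betw_def bij_betw_the_inv_into image_mono)
    moreover have "\<pi> ` ?\<rho> ` Z = Z"
      using Z im inj by (force simp: image_image f_the_inv_into_f)
    ultimately have "\<pi> ` ({0..<m} - ({0..<m} - ?\<rho> ` Z)) = Z" by (simp add: double_diff)
    then show "Z \<in> (\<lambda>X. \<pi> ` ({0..<m} - X)) ` Pow {0..<m}" by blast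
  qed
qed

lemma complement_permute_isomorphic:
  assumes p: "bij_betw \<pi> {0..<m} {0..<m}" and D: "D \<subseteq> Pow {0..<m}"
  shows "isomorphic (induced (hypercube m) (Pow {0..<m} - D))
           (induced (hypercube m) (Pow {0..<m} - (\<lambda>X. \<pi> ` ({0..<m} - X)) ` D))"
proof -
  let ?h = "\<lambda>X. \<pi> ` ({0..<m} - X)"
  have inj: "inj_on ?h (Pow {0..<m})" by (rule complement_permute_inj[OF p])
  have "?h ` (Pow {0..<m} - D) = ?h ` Pow {0..<m} - ?h ` D"
    by (rule inj_on_image_set_diff[OF inj]) (use D in blast)+
  then have image: "?h ` (Pow {0..<m} - D) = Pow {0..<m} - ?h ` D"
    by (simp only: complement_permute_surj[OF p])
  have "graph_iso ?h (induced (hypercube m) (Pow {0..<m} - D)) (induced (hypercube m) (Pow {0..<m} - ?h ` D))"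
  proof (rule induced_hypercube_iso)
    show "Pow {0..<m} - D \<subseteq> Pow {0..<m}" "Pow {0..<m} - ?h ` D \<subseteq> Pow {0..<m}" by blast+
    show "bij_betw ?h (Pow {0..<m} - D) (Pow {0..<m} - ?h ` D)"
      unfolding bij_betw_def using inj_on_subset[OF inj, of "Pow {0..<m} - D"] image by blast
    fix X Y assume XY: "X \<in> Pow {0..<m} - D" "Y \<in> Pow {0..<m} - D"
    have "card (symdiff (?h X) (?h Y)) = card (symdiff ({0..<m} - X) ({0..<m} - Y))"
      using p unfolding bij_betw_def by (intro card_symdiff_image) auto
    also have "\<dots> = card (symdiff X Y)" using XY by (simp add: symdiff_Diff_Diff)
    finally show "card (symdiff (?h X) (?h Y)) = card (symdiff X Y)" .
  qed
  then show ?thesis by (rule graph_iso_isomorphic)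
qed

lemma exists_permutation_onto_initial_segment:
  assumes C: "C \<subseteq> {0..<m}"
  shows "\<exists>\<pi>. bij_betw \<pi> {0..<m} {0..<m} \<and> \<pi> ` C = {0..<card C}"
proof -
  have fC: "finite C" using C finite_subset by blast
  obtain f1 where f1: "bij_betw f1 C {0..<card C}" using ex_bij_betw_finite_nat[OF fC] by blast
  have kc: "card C \<le> m" using card_mono[OF _ C] by simp
  have "card ({0..<m} - C) = card ({0..<m} - {0..<card C})"
    using C kc by (simp add: card_Diff_subset fC)
  then obtain f2 where f2: "bij_betw f2 ({0..<m} - C) ({0..<m} - {0..<card C})"
    using finite_same_card_bij by (metis finite_Diff finite_atLeastLessThan)
  define \<pi> where "\<pi> x = (if x \<in> C then f1 x else f2 x)" for x
  have b1: "bij_betw \<pi> C {0..<card C}"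
    using f1 unfolding \<pi>_def by (rule bij_betw_cong[THEN iffD1, rotated]) auto
  have b2: "bij_betw \<pi> ({0..<m} - C) ({0..<m} - {0..<card C})"
    using f2 unfolding \<pi>_def by (rule bij_betw_cong[THEN iffD1, rotated]) auto
  have "bij_betw \<pi> (C \<union> ({0..<m} - C)) ({0..<card C} \<union> ({0..<m} - {0..<card C}))"
    by (rule bij_betw_combine[OF b1 b2]) auto
  moreover have "C \<union> ({0..<m} - C) = {0..<m}" "{0..<card C} \<union> ({0..<m} - {0..<card C}) = {0..<m}"
    using C kc by auto
  ultimately show ?thesis using b1 unfolding bij_betw_def by auto
qed

lemma isomorphic_Qminus:
  "isomorphic (induced (hypercube m) (Pow {0..<m} - {{}})) (Qminus m)"
  using complement_permute_isomorphic[of id m "{{}}"] unfolding Qminus_def by simp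

lemma isomorphic_Qminusstar:
  assumes "i < m"
  shows "isomorphic (induced (hypercube m) (Pow {0..<m} - {{}, {0..<m} - {i}})) (Qminusstar m)"
proof -
  obtain \<pi> where p: "bij_betw \<pi> {0..<m} {0..<m}" "\<pi> ` {i} = {0..<card {i}}"
    using exists_permutation_onto_initial_segment[of "{i}" m] assms by auto
  then have "(\<lambda>X. \<pi> ` ({0..<m} - X)) ` {{}, {0..<m} - {i}} = {{0..<m}, {0}}"
    using assms unfolding bij_betw_def by auto
  then show ?thesis
    using complement_permute_isomorphic[OF p(1), of "{{}, {0..<m} - {i}}"] assms
    unfolding Qminusstar_def by (simp add: insert_commute)
qed

lemma isomorphic_Qminusminus_m:
  assumes C: "C \<subseteq> {0..<m}"
  shows "isomorphic (induced (hypercube m) (Pow {0..<m} - ({{}, {0..<m}} \<union> (\<lambda>i. {0..<m} - {i}) ` C)))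
    (Qminusminus_m m (card C))"
proof -
  let ?D = "{{}, {0..<m}} \<union> (\<lambda>i. {0..<m} - {i}) ` C"
  obtain \<pi> where p: "bij_betw \<pi> {0..<m} {0..<m}" "\<pi> ` C = {0..<card C}"
    using exists_permutation_onto_initial_segment[OF C] by blast
  have "(\<lambda>X. \<pi> ` ({0..<m} - X)) ` ((\<lambda>i. {0..<m} - {i}) ` C) = (\<lambda>i. {i}) ` (\<pi> ` C)"
    using C by (force simp: image_image)
  also have "\<dots> = {{i} | i. i < card C}" using p(2) by auto
  finally have "(\<lambda>X. \<pi> ` ({0..<m} - X)) ` ?D = {{0..<m}, {}} \<union> {{i} | i. i < card C}"
    using p(1) unfolding bij_betw_def by (simp add: image_Un)
  then show ?thesis
    using complement_permute_isomorphic[OF p(1), of ?D] unfolding Qminusminus_m_def by auto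
qed

lemma subset_card_ge_pred_cases:
  assumes "Y \<subseteq> {0..<m}" "m - 1 \<le> card Y"
  shows "Y = {0..<m} \<or> (\<exists>i<m. Y = {0..<m} - {i})"
proof -
  have "card ({0..<m} - Y) = m - card Y" using assms by (simp add: card_Diff_subset finite_subset)
  then have c: "card ({0..<m} - Y) \<le> 1" using assms by simp
  show ?thesis
  proof (cases "card ({0..<m} - Y) = 0")
    case True
    then show ?thesis using assms(1) by auto
  next
    case False
    then obtain i where "{0..<m} - Y = {i}" using c card_1_singletonE by (metis le_neq_implies_less less_one)
    then have "i < m" "Y = {0..<m} - {i}" using assms(1) by auto
    then show ?thesis by blast
  qed
qed

lemma cube_subset_missing_sets:
  assumes T: "T \<subseteq> Pow {0..<m}" "{} \<notin> T"
    and small: "\<And>Y. Y \<subseteq> {0..<m} \<Longrightarrow> Y \<noteq> {} \<Longrightarrow> card Y \<le> 2 \<or> card Y + 2 \<le> m \<Longrightarrow> Y \<in> T"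
  shows "T = Pow {0..<m} - ({{}} \<union> ({{0..<m}} - T)
    \<union> (\<lambda>i. {0..<m} - {i}) ` {i. i < m \<and> {0..<m} - {i} \<notin> T})"
proof
  show "T \<subseteq> Pow {0..<m} - ({{}} \<union> ({{0..<m}} - T) \<union> (\<lambda>i. {0..<m} - {i}) ` {i. i < m \<and> {0..<m} - {i} \<notin> T})"
    using T by auto
next
  show "Pow {0..<m} - ({{}} \<union> ({{0..<m}} - T) \<union> (\<lambda>i. {0..<m} - {i}) ` {i. i < m \<and> {0..<m} - {i} \<notin> T}) \<subseteq> T"
  proof
    fix Y assume Y: "Y \<in> Pow {0..<m} - ({{}} \<union> ({{0..<m}} - T) \<union> (\<lambda>i. {0..<m} - {i}) ` {i. i < m \<and> {0..<m} - {i} \<notin> T})"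
    show "Y \<in> T"
    proof (rule ccontr)
      assume "Y \<notin> T"
      have Y': "Y \<subseteq> {0..<m}" "Y \<noteq> {}" using Y by auto
      then have "\<not> (card Y \<le> 2 \<or> card Y + 2 \<le> m)" using small \<open>Y \<notin> T\<close> by blast
      then consider "Y = {0..<m}" | i where "i < m" "Y = {0..<m} - {i}"
        using subset_card_ge_pred_cases[OF Y'(1)] by fastforce
      then show False using Y \<open>Y \<notin> T\<close> by cases auto
    qed
  qed
qed

lemma missing_cosingleton_imp_ge_4:
  fixes m :: nat
  assumes m: "3 \<le> m" and i: "i < m" "{0..<m} - {i} \<notin> T"
    and small: "\<And>Y. Y \<subseteq> {0..<m} \<Longrightarrow> Y \<noteq> {} \<Longrightarrow> card Y \<le> 2 \<Longrightarrow> Y \<in> T"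
  shows "4 \<le> m"
proof (rule ccontr)
  assume "\<not> 4 \<le> m"
  have "card ({0..<m} - {i}) = m - 1" using i by simp
  then have "card ({0..<m} - {i}) \<le> 2" "0 < card ({0..<m} - {i})" using m \<open>\<not> 4 \<le> m\<close> by auto
  moreover have "{0..<m} - {i} \<noteq> {}" using calculation(2) by (metis card.empty less_irrefl)
  ultimately show False using small[of "{0..<m} - {i}"] i by blast
qed

lemma isomorphic_Pow_minus_top_cosingletons:
  assumes C: "C \<subseteq> {0..<m}" and m4: "C \<noteq> {} \<Longrightarrow> 4 \<le> m"
  defines "T \<equiv> Pow {0..<m} - ({{}, {0..<m}} \<union> (\<lambda>i. {0..<m} - {i}) ` C)"
  shows "isomorphic (induced (hypercube m) T) (Qminusminus m) \<or> iso_to_Qminus_family (induced (hypercube m) T)"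
proof (cases "C = {}")
  case True
  then have "induced (hypercube m) T = Qminusminus m" unfolding T_def Qminusminus_def by (simp add: insert_commute)
  then show ?thesis using isomorphic_refl by metis
next
  case False
  then have "1 \<le> card C" "card C \<le> m" "4 \<le> m"
    using C m4 card_mono[OF _ C] by (auto simp: Suc_le_eq card_gt_0_iff finite_subset)
  then show ?thesis using isomorphic_Qminusminus_m[OF C] unfolding T_def iso_to_Qminus_family_def by blast
qed

lemma cube_subset_classification:
  assumes m: "3 \<le> m" and T: "T \<subseteq> Pow {0..<m}" "{} \<notin> T"
    and small: "\<And>Y. Y \<subseteq> {0..<m} \<Longrightarrow> Y \<noteq> {} \<Longrightarrow> card Y \<le> 2 \<or> card Y + 2 \<le> m \<Longrightarrow> Y \<in> T"
    and cosingle: "\<And>i j. {0..<m} \<in> T \<Longrightarrow> i < m \<Longrightarrow> j < m \<Longrightarrow> i \<noteq> j \<Longrightarrow>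
      {0..<m} - {i} \<in> T \<or> {0..<m} - {j} \<in> T"
  shows "isomorphic (induced (hypercube m) T) (Qminus m)
    \<or> isomorphic (induced (hypercube m) T) (Qminusminus m)
    \<or> iso_to_Qminus_family (induced (hypercube m) T)"
proof -
  define F C where "F = {0..<m}" and "C = {i. i < m \<and> {0..<m} - {i} \<notin> T}"
  have T_eq: "T = Pow F - ({{}} \<union> ({F} - T) \<union> (\<lambda>i. F - {i}) ` C)"
    unfolding F_def C_def by (rule cube_subset_missing_sets[OF T small])
  have CF: "C \<subseteq> F" unfolding C_def F_def by auto
  have m4: "4 \<le> m" if "i \<in> C" for i
    using missing_cosingleton_imp_ge_4[OF m _ _ small] that unfolding C_def by blast
  show ?thesis
  proof (cases "F \<in> T")
    case True
    then have "{F} - T = {}" by blast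
    note T_eq = T_eq[unfolded this]
    have "i = j" if "i \<in> C" "j \<in> C" for i j
      using cosingle[of i j] True that unfolding C_def F_def by auto
    then consider "C = {}" | i where "C = {i}" by blast
    then show ?thesis
    proof cases
      case 1
      then have "T = Pow F - {{}}" using T_eq by auto
      then show ?thesis using isomorphic_Qminus unfolding F_def by auto
    next
      case 2
      then have "T = Pow F - {{}, F - {i}}" "i < m" "4 \<le> m" using T_eq m4 CF unfolding F_def by auto
      then have "isomorphic (induced (hypercube m) T) (Qminusstar m)"
        using isomorphic_Qminusstar unfolding F_def by simp
      then show ?thesis using \<open>4 \<le> m\<close> unfolding iso_to_Qminus_family_def by blast
    qed
  next
    case False
    then have "{F} - T = {F}" by blast
    then have "T = Pow F - ({{}, F} \<union> (\<lambda>i. F - {i}) ` C)"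
      using T_eq[unfolded \<open>{F} - T = {F}\<close>] by (simp add: insert_commute)
    then show ?thesis using isomorphic_Pow_minus_top_cosingletons[OF CF[unfolded F_def]] m4
      unfolding F_def by auto
  qed
qed

lemma iso_to_Qminus_family_isomorphic:
  "isomorphic A B \<Longrightarrow> iso_to_Qminus_family B \<Longrightarrow> iso_to_Qminus_family A"
  unfolding iso_to_Qminus_family_def using isomorphic_trans by blast

section \<open>Partial cubes\<close>

locale cube_embedding =
  fixes G :: "'a graph" and f :: "'a \<Rightarrow> 'a set"
  assumes graph: "graph G" and connected: "connected_graph G"
    and finite_f: "\<And>v. v \<in> verts G \<Longrightarrow> finite (f v)"
    and gdist_eq_card_symdiff: "\<And>u v. u \<in> verts G \<Longrightarrow> v \<in> verts G \<Longrightarrow> gdist G u v = card (symdiff (f u) (f v))"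
begin

lemma inj_on_f: "inj_on f (verts G)"
proof (rule inj_onI)
  fix u v assume uv: "u \<in> verts G" "v \<in> verts G" "f u = f v"
  then have "gdist G u v = 0" using gdist_eq_card_symdiff by simp
  then obtain p where "walk_betw G u p v" "length p = 1"
    using shortest_walk_exists[OF connected uv(1,2)] by auto
  then show "u = v" unfolding walk_betw_def by (auto simp: length_Suc_conv)
qed

lemma arc_imp_gdist_1:
  assumes a: "(u, v) \<in> arcs G"
  shows "gdist G u v = 1"
proof -
  have uv: "u \<in> verts G" "v \<in> verts G" "u \<noteq> v" using a graph unfolding graph_def by auto
  have "walk_betw G u [u, v] v" using a uv unfolding walk_betw_def by (simp add: walk_Cons_Cons_iff walk_singleton_iff)
  then have "gdist G u v \<le> 1" using gdist_le_walk_length by fastforce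
  moreover have "f u \<noteq> f v" using inj_on_f uv unfolding inj_on_def by blast
  then have "gdist G u v \<noteq> 0" using gdist_eq_card_symdiff[OF uv(1,2)] finite_f uv
    by (simp add: finite_symdiff symdiff_eq_empty_iff)
  ultimately show ?thesis by simp
qed

lemma arc_iff_card_symdiff_1:
  "u \<in> verts G \<Longrightarrow> v \<in> verts G \<Longrightarrow> (u, v) \<in> arcs G \<longleftrightarrow> card (symdiff (f u) (f v)) = 1"
  using arc_imp_gdist_1 gdist_1_imp_arc[OF connected] gdist_eq_card_symdiff by metis

lemma card_symdiff_le_walk_length:
  assumes w: "walk_betw G u p v"
  shows "card (symdiff (f u) (f v)) \<le> length p - 1"
proof -
  have "u \<in> verts G" "v \<in> verts G" using w unfolding walk_betw_def walk_def by auto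
  then show ?thesis using gdist_le_walk_length[OF w] gdist_eq_card_symdiff by simp
qed

lemma geodesic_between:
  assumes w: "walk_betw G u p v" and l: "length p = Suc (gdist G u v)" and x: "x \<in> set p"
  shows "f u \<inter> f v \<subseteq> f x \<and> f x \<subseteq> f u \<union> f v"
proof -
  obtain i where i: "i < length p" "p ! i = x" using x by (meson in_set_conv_nth)
  have wk: "walk G p" and hd: "hd p = u" and la: "last p = v" using w unfolding walk_betw_def by auto
  have ne: "p \<noteq> []" using i by auto
  have uv: "u \<in> verts G" "v \<in> verts G" and xv: "x \<in> verts G"
    using w x unfolding walk_betw_def walk_def by auto
  have "last (take (Suc i) p) = p ! i" using i(1)
    by (subst last_conv_nth) (auto simp: min_def intro: arg_cong[where f="\<lambda>k. p ! k"])
  then have "walk_betw G u (take (Suc i) p) x"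
    unfolding walk_betw_def using walk_take[OF wk, of i] hd i ne by (simp add: hd_take)
  then have "card (symdiff (f u) (f x)) \<le> i" using card_symdiff_le_walk_length i by fastforce
  moreover have "walk_betw G x (drop i p) v"
    unfolding walk_betw_def using walk_drop[OF wk i(1)] la i ne by (simp add: hd_drop_conv_nth)
  then have "card (symdiff (f x) (f v)) \<le> length p - i - 1" using card_symdiff_le_walk_length by fastforce
  ultimately have "card (symdiff (f u) (f x)) + card (symdiff (f x) (f v)) \<le> card (symdiff (f u) (f v))"
    using l gdist_eq_card_symdiff[OF uv] i by simp
  then show ?thesis by (rule card_symdiff_additive_imp_between[OF finite_f[OF uv(1)] finite_f[OF xv] finite_f[OF uv(2)]])
qed

end

lemma partial_cube_imp_cube_embedding:
  assumes "partial_cube G"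
  obtains f where "cube_embedding G f"
  using assms unfolding partial_cube_def cube_embedding_def symdiff_def by blast

lemma full_subdiv_K_Inl_iff: "Inl i \<in> verts (full_subdiv_K m) \<longleftrightarrow> i < m"
  unfolding full_subdiv_K_def by auto

lemma full_subdiv_K_Inr: "i < m \<Longrightarrow> j < m \<Longrightarrow> i \<noteq> j \<Longrightarrow> Inr {i, j} \<in> verts (full_subdiv_K m)"
  unfolding full_subdiv_K_def by auto

lemma full_subdiv_K_arc: "i < m \<Longrightarrow> j < m \<Longrightarrow> i \<noteq> j \<Longrightarrow>
   (Inl i, Inr {i, j}) \<in> arcs (full_subdiv_K m) \<and> (Inr {i, j}, Inl i) \<in> arcs (full_subdiv_K m)"
  unfolding full_subdiv_K_def by auto

lemma full_subdiv_K_no_arc_Inl_Inl: "(Inl i, Inl j) \<notin> arcs (full_subdiv_K m)"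
  unfolding full_subdiv_K_def by auto

lemma full_subdiv_K_arc_Inr_Inl: "(Inr {i, j}, Inl k) \<in> arcs (full_subdiv_K m) \<Longrightarrow> k = i \<or> k = j"
  unfolding full_subdiv_K_def by auto

lemma full_subdiv_K_arcs_iff:
  "u \<in> verts (full_subdiv_K n) \<Longrightarrow> v \<in> verts (full_subdiv_K n) \<Longrightarrow>
    (u, v) \<in> arcs (full_subdiv_K n) \<longleftrightarrow> (\<exists>i e. (u = Inl i \<and> v = Inr e \<or> u = Inr e \<and> v = Inl i) \<and> i \<in> e)"
  unfolding full_subdiv_K_def by auto

definition subdiv_verts :: "nat set \<Rightarrow> (nat + nat set) set" where
  "subdiv_verts K = Inl ` K \<union> Inr ` {{i, j} | i j. i \<in> K \<and> j \<in> K \<and> i \<noteq> j}"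

lemma verts_full_subdiv_K: "verts (full_subdiv_K n) = subdiv_verts {0..<n}"
  unfolding full_subdiv_K_def subdiv_verts_def by auto

lemma subdiv_verts_mono: "K \<subseteq> K' \<Longrightarrow> subdiv_verts K \<subseteq> subdiv_verts K'"
  unfolding subdiv_verts_def by blast

lemma exists_third: "3 \<le> m \<Longrightarrow> \<exists>k<m. k \<noteq> i \<and> k \<noteq> (j::nat)"
proof -
  assume m: "3 \<le> m"
  have "\<exists>k\<in>{0, 1, 2}. k \<noteq> i \<and> k \<noteq> j" by auto
  then obtain k where "k \<in> {0, 1, 2}" "k \<noteq> i" "k \<noteq> j" by blast
  then show ?thesis using m by (intro exI[of _ k]) auto
qed

lemma subdiv_verts_relabel_bij:
  assumes s: "bij_betw \<sigma> {0..<k} K"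
  shows "bij_betw (map_sum \<sigma> ((`) \<sigma>)) (subdiv_verts {0..<k}) (subdiv_verts K)"
proof -
  have inj: "inj_on \<sigma> {0..<k}" and im: "\<sigma> ` {0..<k} = K" using s unfolding bij_betw_def by auto
  have "inj_on (map_sum \<sigma> ((`) \<sigma>)) (subdiv_verts {0..<k})"
  proof (rule inj_onI)
    fix u v assume u: "u \<in> subdiv_verts {0..<k}" and v: "v \<in> subdiv_verts {0..<k}"
      and e: "map_sum \<sigma> ((`) \<sigma>) u = map_sum \<sigma> ((`) \<sigma>) v"
    show "u = v"
    proof (cases u; cases v)
      fix i j assume "u = Inl i" "v = Inl j"
      then show ?thesis using e u v inj unfolding subdiv_verts_def inj_on_def by auto
    next
      fix eu ev assume uv: "u = Inr eu" "v = Inr ev"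
      then have "eu \<subseteq> {0..<k}" "ev \<subseteq> {0..<k}" "\<sigma> ` eu = \<sigma> ` ev" using u v e unfolding subdiv_verts_def by auto
      then show ?thesis using uv inj by (simp add: inj_on_image_eq_iff)
    qed (use e in auto)
  qed
  moreover have "map_sum \<sigma> ((`) \<sigma>) ` subdiv_verts {0..<k} = subdiv_verts K"
  proof -
    have "(`) \<sigma> ` {{i, j} | i j. i \<in> {0..<k} \<and> j \<in> {0..<k} \<and> i \<noteq> j} = {{i, j} | i j. i \<in> K \<and> j \<in> K \<and> i \<noteq> j}"
    proof (intro equalityI subsetI)
      fix e assume "e \<in> (`) \<sigma> ` {{i, j} | i j. i \<in> {0..<k} \<and> j \<in> {0..<k} \<and> i \<noteq> j}"
      then obtain i j where "e = {\<sigma> i, \<sigma> j}" "i \<in> {0..<k}" "j \<in> {0..<k}" "i \<noteq> j" by auto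
      then show "e \<in> {{i, j} | i j. i \<in> K \<and> j \<in> K \<and> i \<noteq> j}" using im inj unfolding inj_on_def by blast
    next
      fix e assume "e \<in> {{i, j} | i j. i \<in> K \<and> j \<in> K \<and> i \<noteq> j}"
      then obtain i j where e: "e = {i, j}" "i \<in> K" "j \<in> K" "i \<noteq> j" by auto
      then obtain i' j' where "i' \<in> {0..<k}" "j' \<in> {0..<k}" "i = \<sigma> i'" "j = \<sigma> j'" using im by blast
      then show "e \<in> (`) \<sigma> ` {{i, j} | i j. i \<in> {0..<k} \<and> j \<in> {0..<k} \<and> i \<noteq> j}"
        using e by (intro image_eqI[of _ _ "{i', j'}"]) auto
    qed
    moreover have "map_sum \<sigma> ((`) \<sigma>) ` (Inl ` A \<union> Inr ` B) = Inl ` (\<sigma> ` A) \<union> Inr ` ((`) \<sigma> ` B)" for A B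
      by (simp add: image_Un image_image)
    ultimately show ?thesis unfolding subdiv_verts_def using im by simp
  qed
  ultimately show ?thesis unfolding bij_betw_def by blast
qed

lemma full_subdiv_K_relabel_arcs_iff:
  assumes s: "bij_betw \<sigma> {0..<k} K" and K: "K \<subseteq> {0..<n}"
    and u: "u \<in> verts (full_subdiv_K k)" and v: "v \<in> verts (full_subdiv_K k)"
  shows "(u, v) \<in> arcs (full_subdiv_K k) \<longleftrightarrow>
    (map_sum \<sigma> ((`) \<sigma>) u, map_sum \<sigma> ((`) \<sigma>) v) \<in> arcs (full_subdiv_K n)"
proof -
  have inj: "inj_on \<sigma> {0..<k}" using s unfolding bij_betw_def by auto
  have "map_sum \<sigma> ((`) \<sigma>) u \<in> verts (full_subdiv_K n)" "map_sum \<sigma> ((`) \<sigma>) v \<in> verts (full_subdiv_K n)"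
    using subdiv_verts_relabel_bij[OF s] u v subdiv_verts_mono[OF K]
    unfolding verts_full_subdiv_K bij_betw_def by auto
  note iff = full_subdiv_K_arcs_iff[OF u v] full_subdiv_K_arcs_iff[OF this]
  have mem: "\<sigma> i \<in> \<sigma> ` e \<longleftrightarrow> i \<in> e" if "i < k" "e \<subseteq> {0..<k}" for i e
    using inj that by (meson inj_on_image_mem_iff atLeastLessThan_iff zero_le)
  show ?thesis
  proof (cases u; cases v)
    fix i e assume "u = Inl i" "v = Inr e"
    then show ?thesis using iff mem[of i e] u v unfolding verts_full_subdiv_K subdiv_verts_def by auto
  next
    fix e i assume "u = Inr e" "v = Inl i"
    then show ?thesis using iff mem[of i e] u v unfolding verts_full_subdiv_K subdiv_verts_def by auto
  qed (use iff in auto)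
qed

section \<open>A subdivided clique inside a partial cube\<close>

locale subdivided_clique = cube_embedding G f for G :: "'a graph" and f +
  fixes H :: "'a graph" and m :: nat and \<phi> :: "nat + nat set \<Rightarrow> 'a"
  assumes iso: "graph_iso \<phi> (full_subdiv_K m) H" and isometric: "isometric_subgraph H G"
    and m_ge_3: "3 \<le> m"
begin

definition orig :: "nat \<Rightarrow> 'a" where "orig i = \<phi> (Inl i)"
definition subd :: "nat \<Rightarrow> nat \<Rightarrow> 'a" where "subd i j = \<phi> (Inr {i, j})"

lemma subd_commute: "subd i j = subd j i"
  unfolding subd_def by (simp add: insert_commute)

lemma H_subgraph: "graph H" "verts H \<subseteq> verts G" "arcs H \<subseteq> arcs G"
  using isometric unfolding isometric_subgraph_def subgraph_def by auto

lemma orig_in_H: "i < m \<Longrightarrow> orig i \<in> verts H"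
  using iso full_subdiv_K_Inl_iff unfolding graph_iso_def bij_betw_def orig_def by blast

lemma subd_in_H: "i < m \<Longrightarrow> j < m \<Longrightarrow> i \<noteq> j \<Longrightarrow> subd i j \<in> verts H"
  using iso full_subdiv_K_Inr unfolding graph_iso_def bij_betw_def subd_def by blast

lemma orig_in_G: "i < m \<Longrightarrow> orig i \<in> verts G"
  using orig_in_H H_subgraph by blast

lemma subd_in_G: "i < m \<Longrightarrow> j < m \<Longrightarrow> i \<noteq> j \<Longrightarrow> subd i j \<in> verts G"
  using subd_in_H H_subgraph by blast

lemma orig_eq_iff: "i < m \<Longrightarrow> j < m \<Longrightarrow> orig i = orig j \<longleftrightarrow> i = j"
  using iso full_subdiv_K_Inl_iff unfolding graph_iso_def bij_betw_def inj_on_def orig_def by blast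

lemma arc_orig_subd_H:
  assumes "i < m" "j < m" "i \<noteq> j"
  shows "(orig i, subd i j) \<in> arcs H \<and> (subd i j, orig i) \<in> arcs H"
  using iso full_subdiv_K_arc[OF assms] full_subdiv_K_Inl_iff full_subdiv_K_Inr[OF assms] assms
  unfolding graph_iso_def orig_def subd_def by blast

lemma arc_orig_subd: "i < m \<Longrightarrow> j < m \<Longrightarrow> i \<noteq> j \<Longrightarrow> (orig i, subd i j) \<in> arcs G \<and> (subd i j, orig i) \<in> arcs G"
  using arc_orig_subd_H H_subgraph(3) by blast

lemma arc_G_imp_arc_H:
  assumes uv: "u \<in> verts H" "v \<in> verts H" "(u, v) \<in> arcs G"
  shows "(u, v) \<in> arcs H"
proof -
  have "gdist G u v = 1" by (rule arc_imp_gdist_1[OF uv(3)])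
  then have "gdist H u v = 1" using isometric uv unfolding isometric_subgraph_def by simp
  moreover have "connected_graph H" using isometric unfolding isometric_subgraph_def by simp
  ultimately show ?thesis using gdist_1_imp_arc[of H u v] uv(1,2) by simp
qed

lemma card_symdiff_orig_orig:
  assumes a: "i < m" "j < m" "i \<noteq> j"
  shows "card (symdiff (f (orig i)) (f (orig j))) = 2"
proof -
  have "walk_betw G (orig i) [orig i, subd i j, orig j] (orig j)"
    using arc_orig_subd[OF a] arc_orig_subd[of j i] a orig_in_G subd_in_G subd_commute
    unfolding walk_betw_def by (auto simp: walk_Cons_Cons_iff walk_singleton_iff)
  then have "card (symdiff (f (orig i)) (f (orig j))) \<le> 2" using card_symdiff_le_walk_length by fastforce
  moreover have "f (orig i) \<noteq> f (orig j)"
    using inj_on_f orig_in_G orig_eq_iff a unfolding inj_on_def by blast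
  then have "card (symdiff (f (orig i)) (f (orig j))) \<noteq> 0"
    using finite_f orig_in_G a by (simp add: finite_symdiff symdiff_eq_empty_iff)
  moreover have "card (symdiff (f (orig i)) (f (orig j))) \<noteq> 1"
  proof
    assume "card (symdiff (f (orig i)) (f (orig j))) = 1"
    then have "(orig i, orig j) \<in> arcs G" using arc_iff_card_symdiff_1 orig_in_G a by blast
    then have "(orig i, orig j) \<in> arcs H" using arc_G_imp_arc_H orig_in_H a by blast
    then have "(Inl i, Inl j) \<in> arcs (full_subdiv_K m)"
      using iso full_subdiv_K_Inl_iff a unfolding graph_iso_def orig_def by blast
    then show False using full_subdiv_K_no_arc_Inl_Inl by blast
  qed
  ultimately show ?thesis by linarith
qed

lemma card_symdiff_subd_orig: "i < m \<Longrightarrow> j < m \<Longrightarrow> i \<noteq> j \<Longrightarrow> card (symdiff (f (subd i j)) (f (orig i))) = 1"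
  using arc_orig_subd arc_iff_card_symdiff_1 orig_in_G subd_in_G by blast

lemma card_symdiff_subd_other_orig:
  assumes a: "i < m" "j < m" "i \<noteq> j" "k < m" "k \<noteq> i" "k \<noteq> j"
  shows "card (symdiff (f (subd i j)) (f (orig k))) \<noteq> 1"
proof
  assume "card (symdiff (f (subd i j)) (f (orig k))) = 1"
  then have "(subd i j, orig k) \<in> arcs G" using arc_iff_card_symdiff_1 orig_in_G subd_in_G a by blast
  then have "(subd i j, orig k) \<in> arcs H" using arc_G_imp_arc_H orig_in_H subd_in_H a by blast
  then have "(Inr {i, j}, Inl k) \<in> arcs (full_subdiv_K m)"
    using iso full_subdiv_K_Inl_iff full_subdiv_K_Inr a unfolding graph_iso_def orig_def subd_def by blast
  then show False using full_subdiv_K_arc_Inr_Inl a by blast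
qed

text \<open>The fourth corner of the square on \<open>x\<^sub>i, y\<^sub>i\<^sub>j, x\<^sub>j\<close> in the cube.\<close>

definition corner :: "nat \<Rightarrow> nat \<Rightarrow> 'a set" where
  "corner i j = symdiff (symdiff (f (orig i)) (f (orig j))) (f (subd i j))"

lemma corner_commute: "corner i j = corner j i"
  unfolding corner_def using subd_commute by (simp add: symdiff_commute)

lemma corner_eq_and_adjacent:
  assumes a: "i < m" "j < m" "k < m" "i \<noteq> j" "i \<noteq> k" "j \<noteq> k"
  shows "corner i j = corner i k \<and> card (symdiff (corner i j) (f (orig i))) = 1"
proof -
  have j: "card (symdiff (f (subd i j)) (f (orig j))) = 1"
    and k: "card (symdiff (f (subd i k)) (f (orig k))) = 1"
    using card_symdiff_subd_orig[of j i] card_symdiff_subd_orig[of k i] a subd_commute by simp_all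
  show ?thesis unfolding corner_def
    by (rule square_corners_agree[OF card_symdiff_orig_orig card_symdiff_orig_orig card_symdiff_orig_orig
        card_symdiff_subd_orig j card_symdiff_subd_other_orig card_symdiff_subd_orig k
        card_symdiff_subd_other_orig]) (use a in auto)
qed

lemma corner_eq_corner_0_1:
  assumes a: "i < m" "j < m" "i \<noteq> j"
  shows "corner i j = corner 0 1"
proof -
  have m1: "0 < m" "1 < m" using m_ge_3 by auto
  have c0: "corner 0 j = corner 0 1" if "j < m" "j \<noteq> 0" for j
    using corner_eq_and_adjacent[of 0 j 1] that m1 by (cases "j = 1") auto
  show ?thesis
  proof (cases "i = 0")
    case True then show ?thesis using c0[of j] a by simp
  next
    case False
    have "corner i j = corner i 0" using corner_eq_and_adjacent[of i j 0] a False m1 by (cases "j = 0") auto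
    also have "\<dots> = corner 0 1" using corner_commute c0[of i] a False by simp
    finally show ?thesis .
  qed
qed

definition centre :: "'a set" where "centre = corner 0 1"

lemma finite_centre: "finite centre"
  unfolding centre_def corner_def using finite_f orig_in_G subd_in_G m_ge_3 by (intro finite_symdiff) auto

lemma card_symdiff_centre_orig: "i < m \<Longrightarrow> card (symdiff centre (f (orig i))) = 1"
proof -
  assume i: "i < m"
  obtain j where j: "j < m" "j \<noteq> i" using exists_third[OF m_ge_3, of i i] by blast
  obtain k where k: "k < m" "k \<noteq> i" "k \<noteq> j" using exists_third[OF m_ge_3, of i j] by blast
  show ?thesis using corner_eq_and_adjacent[of i j k] corner_eq_corner_0_1[of i j] i j k
    unfolding centre_def by auto
qed

definition direction :: "nat \<Rightarrow> 'a" where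
  "direction i = (THE e. symdiff centre (f (orig i)) = {e})"

lemma f_orig: "i < m \<Longrightarrow> f (orig i) = symdiff centre {direction i}"
proof -
  assume i: "i < m"
  obtain e where e: "symdiff centre (f (orig i)) = {e}"
    using card_symdiff_centre_orig[OF i] card_1_singletonE by blast
  then have "direction i = e" unfolding direction_def by simp
  then show ?thesis using e by (metis symdiff_eq_iff symdiff_commute)
qed

lemma inj_on_direction: "inj_on direction {0..<m}"
proof (rule inj_onI)
  fix i j assume ij: "i \<in> {0..<m}" "j \<in> {0..<m}" "direction i = direction j"
  then have "f (orig i) = f (orig j)" using f_orig by simp
  then have "orig i = orig j" using inj_on_f orig_in_G ij unfolding inj_on_def by simp
  then show "i = j" using orig_eq_iff ij by simp
qed

lemma direction_eq_iff: "i < m \<Longrightarrow> j < m \<Longrightarrow> direction i = direction j \<longleftrightarrow> i = j"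
  using inj_on_direction unfolding inj_on_def by auto

lemma f_subd:
  assumes a: "i < m" "j < m" "i \<noteq> j"
  shows "f (subd i j) = symdiff centre {direction i, direction j}"
proof -
  have "symdiff (f (subd i j)) (symdiff (f (orig i)) (f (orig j))) = centre"
    using corner_eq_corner_0_1[OF a] unfolding centre_def corner_def by (simp add: symdiff_commute)
  then have "f (subd i j) = symdiff (symdiff (f (orig i)) (f (orig j))) centre"
    by (rule symdiff_eq_iff[THEN iffD1])
  also have "\<dots> = symdiff (symdiff (symdiff centre {direction i}) (symdiff centre {direction j})) centre"
    using f_orig a by simp
  also have "\<dots> = symdiff (symdiff {direction i} {direction j}) centre"
    by (simp only: symdiff_cancel_left)
  also have "\<dots> = symdiff centre {direction i, direction j}"
    using direction_eq_iff a unfolding symdiff_def by auto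
  finally show ?thesis .
qed

definition region :: "nat set \<Rightarrow> 'a set" where
  "region K = {v \<in> verts G. symdiff (f v) centre \<subseteq> direction ` K}"

definition label :: "'a \<Rightarrow> nat set" where
  "label v = {i. i < m \<and> direction i \<in> symdiff (f v) centre}"

definition clique_verts :: "nat set \<Rightarrow> 'a set" where
  "clique_verts K = orig ` K \<union> {subd i j | i j. i \<in> K \<and> j \<in> K \<and> i \<noteq> j}"

definition labels :: "nat set set" where
  "labels = label ` region {0..<m}"

lemma region_mono: "K \<subseteq> K' \<Longrightarrow> region K \<subseteq> region K'"
  unfolding region_def by (blast dest: image_mono)

lemma label_subset: "label v \<subseteq> {0..<m}"
  unfolding label_def by auto

lemma labels_subset: "labels \<subseteq> Pow {0..<m}"
  unfolding labels_def using label_subset by auto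

lemma symdiff_f_centre_eq_label:
  assumes K: "K \<subseteq> {0..<m}" and v: "v \<in> region K"
  shows "symdiff (f v) centre = direction ` label v \<and> label v \<subseteq> K"
proof -
  have s: "symdiff (f v) centre \<subseteq> direction ` K" using v unfolding region_def by simp
  have "symdiff (f v) centre = direction ` label v"
  proof
    show "symdiff (f v) centre \<subseteq> direction ` label v"
    proof
      fix e assume e: "e \<in> symdiff (f v) centre"
      then obtain i where i: "i \<in> K" "e = direction i" using s by auto
      then show "e \<in> direction ` label v" using K e unfolding label_def by auto
    qed
    show "direction ` label v \<subseteq> symdiff (f v) centre" unfolding label_def by auto
  qed
  moreover have "label v \<subseteq> K"
  proof
    fix i assume "i \<in> label v"
    then have "i < m" "direction i \<in> direction ` K" using s unfolding label_def by auto
    then show "i \<in> K" using K inj_on_direction by (meson atLeastLessThan_iff inj_on_image_mem_iff zero_le)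
  qed
  ultimately show ?thesis by simp
qed

lemma card_symdiff_f_eq_label:
  assumes K: "K \<subseteq> {0..<m}" and uv: "u \<in> region K" "v \<in> region K"
  shows "card (symdiff (f u) (f v)) = card (symdiff (label u) (label v))"
proof -
  have "symdiff (f u) (f v) = symdiff (symdiff centre (f u)) (symdiff centre (f v))"
    by (simp add: symdiff_cancel_left)
  also have "\<dots> = symdiff (direction ` label u) (direction ` label v)"
    using symdiff_f_centre_eq_label[OF K uv(1)] symdiff_f_centre_eq_label[OF K uv(2)]
    by (simp add: symdiff_commute)
  finally have "card (symdiff (f u) (f v)) = card (symdiff (direction ` label u) (direction ` label v))"
    by simp
  also have "\<dots> = card (symdiff (label u) (label v))"
    by (rule card_symdiff_image[OF inj_on_direction label_subset label_subset])
  finally show ?thesis .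
qed

lemma gdist_eq_card_symdiff_label:
  "u \<in> region {0..<m} \<Longrightarrow> v \<in> region {0..<m} \<Longrightarrow> gdist G u v = card (symdiff (label u) (label v))"
  using gdist_eq_card_symdiff card_symdiff_f_eq_label[of "{0..<m}"] unfolding region_def by auto

lemma inj_on_label: "inj_on label (region {0..<m})"
proof (rule inj_onI)
  fix u v assume uv: "u \<in> region {0..<m}" "v \<in> region {0..<m}" "label u = label v"
  then have "symdiff (f u) centre = symdiff (f v) centre"
    using symdiff_f_centre_eq_label[OF order_refl uv(1)] symdiff_f_centre_eq_label[OF order_refl uv(2)] by simp
  then have "f u = f v" by (metis symdiff_cancel_right symdiff_commute)
  then show "u = v" using inj_on_f uv unfolding inj_on_def region_def by auto
qed

lemma symdiff_f_orig_centre: "i < m \<Longrightarrow> symdiff (f (orig i)) centre = {direction i}"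
  using f_orig by (simp add: symdiff_cancel_right)

lemma symdiff_f_subd_centre:
  "i < m \<Longrightarrow> j < m \<Longrightarrow> i \<noteq> j \<Longrightarrow> symdiff (f (subd i j)) centre = {direction i, direction j}"
  using f_subd by (simp add: symdiff_cancel_right)

lemma label_orig: "i < m \<Longrightarrow> label (orig i) = {i}"
  unfolding label_def using symdiff_f_orig_centre direction_eq_iff by auto

lemma label_subd: "i < m \<Longrightarrow> j < m \<Longrightarrow> i \<noteq> j \<Longrightarrow> label (subd i j) = {i, j}"
  unfolding label_def using symdiff_f_subd_centre direction_eq_iff by auto

lemma clique_verts_subset_region:
  assumes K: "K \<subseteq> {0..<m}"
  shows "clique_verts K \<subseteq> region K"
proof
  fix v assume "v \<in> clique_verts K"
  then consider i where "i \<in> K" "v = orig i" | i j where "i \<in> K" "j \<in> K" "i \<noteq> j" "v = subd i j"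
    unfolding clique_verts_def by blast
  then show "v \<in> region K"
  proof cases
    case 1
    then have "i < m" using K by auto
    then show ?thesis using 1 symdiff_f_orig_centre orig_in_G unfolding region_def by auto
  next
    case 2
    then have "i < m" "j < m" using K by auto
    then have "symdiff (f v) centre \<subseteq> direction ` K" "v \<in> verts G"
      using 2 symdiff_f_subd_centre subd_in_G by auto
    then show ?thesis unfolding region_def by simp
  qed
qed

lemma orig_in_clique_verts: "i \<in> K \<Longrightarrow> orig i \<in> clique_verts K"
  unfolding clique_verts_def by auto

lemma subd_in_clique_verts: "i \<in> K \<Longrightarrow> j \<in> K \<Longrightarrow> i \<noteq> j \<Longrightarrow> subd i j \<in> clique_verts K"
  unfolding clique_verts_def by auto

lemma orig_in_region: "i < m \<Longrightarrow> orig i \<in> region {0..<m}"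
  using clique_verts_subset_region[of "{0..<m}"] orig_in_clique_verts by auto

lemma subd_in_region: "i < m \<Longrightarrow> j < m \<Longrightarrow> i \<noteq> j \<Longrightarrow> subd i j \<in> region {0..<m}"
  using clique_verts_subset_region[of "{0..<m}"] subd_in_clique_verts by auto

lemma small_sets_in_labels:
  assumes Y: "Y \<subseteq> {0..<m}" "Y \<noteq> {}" "card Y \<le> 2"
  shows "Y \<in> labels"
proof -
  have "finite Y" using Y finite_subset by blast
  then have "card Y = 1 \<or> card Y = 2" using Y by (metis One_nat_def card_0_eq le_Suc_eq numeral_2_eq_2 le_zero_eq)
  then show ?thesis
  proof
    assume "card Y = 1"
    then obtain i where "Y = {i}" using card_1_singletonE by blast
    then show ?thesis using Y label_orig orig_in_region unfolding labels_def by (auto intro!: image_eqI)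
  next
    assume "card Y = 2"
    then obtain i j where "Y = {i, j}" "i \<noteq> j" using card_2_iff by metis
    then show ?thesis using Y label_subd subd_in_region unfolding labels_def by (auto intro!: image_eqI)
  qed
qed

lemma convex_region:
  assumes K: "K \<subseteq> {0..<m}"
  shows "convex_set G (region K)"
  unfolding convex_set_def
proof (intro conjI ballI allI impI)
  show "region K \<subseteq> verts G" unfolding region_def by auto
next
  fix u v p assume uv: "u \<in> region K" "v \<in> region K"
    and p: "walk_betw G u p v \<and> length p = Suc (gdist G u v)"
  show "set p \<subseteq> region K"
  proof
    fix w assume w: "w \<in> set p"
    then have "w \<in> verts G" using p unfolding walk_betw_def walk_def by auto
    moreover have "f u \<inter> f v \<subseteq> f w \<and> f w \<subseteq> f u \<union> f v" using geodesic_between p w by blast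
    then have "symdiff (f w) centre \<subseteq> symdiff (f u) centre \<union> symdiff (f v) centre"
      using between_symdiff_shift by blast
    ultimately show "w \<in> region K" using uv unfolding region_def by auto
  qed
qed

lemma label_between:
  assumes u: "u \<in> region {0..<m}" and v: "v \<in> region {0..<m}"
    and p: "walk_betw G u p v" "length p = Suc (gdist G u v)" and z: "z \<in> set p"
  shows "z \<in> region {0..<m} \<and> label u \<inter> label v \<subseteq> label z \<and> label z \<subseteq> label u \<union> label v"
proof -
  have zR: "z \<in> region {0..<m}" using convex_region[of "{0..<m}"] u v p z unfolding convex_set_def by blast
  have "f u \<inter> f v \<subseteq> f z \<and> f z \<subseteq> f u \<union> f v" using geodesic_between p z by blast
  then have b: "symdiff (f u) centre \<inter> symdiff (f v) centre \<subseteq> symdiff (f z) centre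
      \<and> symdiff (f z) centre \<subseteq> symdiff (f u) centre \<union> symdiff (f v) centre"
    using between_symdiff_shift by blast
  have e: "symdiff (f u) centre = direction ` label u" "symdiff (f v) centre = direction ` label v"
    "symdiff (f z) centre = direction ` label z"
    using symdiff_f_centre_eq_label[OF _ u] symdiff_f_centre_eq_label[OF _ v]
      symdiff_f_centre_eq_label[OF _ zR] by auto
  have mem: "direction i \<in> direction ` label w \<longleftrightarrow> i \<in> label w" if "i < m" for i w
    using inj_on_direction label_subset that by (meson atLeastLessThan_iff inj_on_image_mem_iff zero_le)
  have "label u \<inter> label v \<subseteq> label z"
  proof
    fix i assume i: "i \<in> label u \<inter> label v"
    then have "i < m" using label_subset[of u] by auto
    moreover have "direction i \<in> direction ` label z" using b i unfolding e by blast
    ultimately show "i \<in> label z" using mem by blast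
  qed
  moreover have "label z \<subseteq> label u \<union> label v"
  proof
    fix i assume i: "i \<in> label z"
    then have "i < m" using label_subset[of z] by auto
    moreover have "direction i \<in> direction ` label u \<union> direction ` label v" using b i unfolding e by blast
    ultimately show "i \<in> label u \<union> label v" using mem by blast
  qed
  ultimately show ?thesis using zR by simp
qed

lemma graph_iso_label:
  assumes K: "K \<subseteq> {0..<m}"
  shows "graph_iso label (induced G (region K)) (induced (hypercube m) (label ` region K))"
  unfolding graph_iso_def
proof (intro conjI ballI)
  show "bij_betw label (verts (induced G (region K))) (verts (induced (hypercube m) (label ` region K)))"
    using inj_on_subset[OF inj_on_label region_mono[OF K]] unfolding bij_betw_def by simp
  fix u v assume "u \<in> verts (induced G (region K))" "v \<in> verts (induced G (region K))"
  then have uv: "u \<in> region K" "v \<in> region K" by auto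
  then have uvG: "u \<in> verts G" "v \<in> verts G" unfolding region_def by auto
  have "(u, v) \<in> arcs (induced G (region K)) \<longleftrightarrow> (u, v) \<in> arcs G" using uv unfolding induced_def by auto
  also have "\<dots> \<longleftrightarrow> card (symdiff (label u) (label v)) = 1"
    using arc_iff_card_symdiff_1[OF uvG] card_symdiff_f_eq_label[OF K uv] by simp
  also have "\<dots> \<longleftrightarrow> (label u, label v) \<in> arcs (induced (hypercube m) (label ` region K))"
    using uv label_subset by (simp add: induced_hypercube_arcs_iff)
  finally show "(u, v) \<in> arcs (induced G (region K)) \<longleftrightarrow>
    (label u, label v) \<in> arcs (induced (hypercube m) (label ` region K))" .
qed

lemma label_image_region:
  assumes K: "K \<subseteq> {0..<m}"
  shows "label ` region K = labels \<inter> Pow K"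
proof
  show "label ` region K \<subseteq> labels \<inter> Pow K"
    unfolding labels_def using symdiff_f_centre_eq_label[OF K] region_mono[OF K] by blast
  show "labels \<inter> Pow K \<subseteq> label ` region K"
  proof
    fix t assume t: "t \<in> labels \<inter> Pow K"
    then obtain v where v: "v \<in> region {0..<m}" "t = label v" unfolding labels_def by auto
    then have "symdiff (f v) centre \<subseteq> direction ` K"
      using symdiff_f_centre_eq_label[OF _ v(1)] t by auto
    then have "v \<in> region K" using v unfolding region_def by auto
    then show "t \<in> label ` region K" using v by auto
  qed
qed

end

locale apex_free_subdivided_clique = subdivided_clique +
  assumes no_apex: "\<not> (\<exists>v\<in>verts G. \<forall>i<m. (v, orig i) \<in> arcs G)"
begin

lemma f_ne_centre: "v \<in> verts G \<Longrightarrow> f v \<noteq> centre"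
proof
  assume v: "v \<in> verts G" and fc: "f v = centre"
  have "(v, orig i) \<in> arcs G" if "i < m" for i
    using fc f_orig[OF that] arc_iff_card_symdiff_1 v orig_in_G that by simp
  then show False using no_apex v by blast
qed

lemma empty_notin_labels: "{} \<notin> labels"
proof
  assume "{} \<in> labels"
  then obtain v where v: "v \<in> region {0..<m}" "label v = {}" unfolding labels_def by auto
  then have "symdiff (f v) centre = {}" using symdiff_f_centre_eq_label[OF _ v(1)] by simp
  then show False using f_ne_centre v unfolding region_def symdiff_eq_empty_iff by auto
qed

lemma geodesic_step_down:
  assumes K: "K \<subseteq> {0..<m}" and w: "w \<in> region K" and e: "e \<in> symdiff (f w) centre"
    and two: "2 \<le> card (symdiff (f w) centre)"
  shows "\<exists>b\<in>symdiff (f w) centre. b \<noteq> e \<and>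
    (\<exists>z\<in>verts G. (w, z) \<in> arcs G \<and> symdiff (f z) centre = symdiff (f w) centre - {b})"
proof -
  let ?Z = "symdiff (f w) centre"
  have wG: "w \<in> verts G" using w unfolding region_def by simp
  obtain i where i: "i \<in> K" "e = direction i" using e w unfolding region_def by auto
  have im: "i < m" using i K by auto
  have fZ: "finite ?Z" using finite_f[OF wG] finite_centre by (rule finite_symdiff)
  obtain p where p: "walk_betw G w p (orig i)" "length p = Suc (gdist G w (orig i))"
    using shortest_walk_exists[OF connected wG orig_in_G[OF im]] by blast
  have "symdiff (f w) (f (orig i)) = ?Z - {direction i}"
    using f_orig[OF im] e i unfolding symdiff_def by auto
  then have "gdist G w (orig i) = card ?Z - 1"
    using gdist_eq_card_symdiff wG orig_in_G im e i fZ by (simp add: card_Diff_singleton)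
  then have lp: "2 \<le> length p" using p two by simp
  define z where "z = p ! 1"
  have arc: "(w, z) \<in> arcs G" and zp: "z \<in> set p" using second_vertex_of_walk[OF p(1) lp] unfolding z_def by auto
  then have zG: "z \<in> verts G" using p unfolding walk_betw_def walk_def by auto
  have "f w \<inter> f (orig i) \<subseteq> f z \<and> f z \<subseteq> f w \<union> f (orig i)" using geodesic_between[OF p zp] .
  then have "?Z \<inter> {direction i} \<subseteq> symdiff (f z) centre \<and> symdiff (f z) centre \<subseteq> ?Z \<union> {direction i}"
    using between_symdiff_shift[of "f w" "f (orig i)" "f z" centre] f_orig[OF im]
    by (simp add: symdiff_cancel_right)
  then have sub: "symdiff (f z) centre \<subseteq> ?Z" and ai: "direction i \<in> symdiff (f z) centre"
    using e i by auto
  have "card (symdiff (f w) (f z)) = 1" using arc arc_iff_card_symdiff_1 wG zG by blast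
  moreover have "symdiff (f w) (f z) = symdiff ?Z (symdiff (f z) centre)"
    by (metis symdiff_cancel_left symdiff_commute)
  ultimately obtain b where b: "symdiff ?Z (symdiff (f z) centre) = {b}"
    using card_1_singletonE by metis
  then have "b \<in> ?Z" "symdiff (f z) centre = ?Z - {b}" using sub unfolding symdiff_def by auto
  moreover have "b \<noteq> e" using ai i calculation by auto
  ultimately show ?thesis using zG arc by blast
qed

lemma region_card_le_2_in_clique_verts:
  assumes K: "K \<subseteq> {0..<m}" and w: "w \<in> region K" and two: "card (symdiff (f w) centre) \<le> 2"
  shows "w \<in> clique_verts K"
proof -
  let ?Z = "symdiff (f w) centre"
  have wG: "w \<in> verts G" and ZK: "?Z \<subseteq> direction ` K" using w unfolding region_def by auto
  have "finite ?Z" using finite_f[OF wG] finite_centre by (rule finite_symdiff)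
  moreover have "?Z \<noteq> {}" using f_ne_centre[OF wG] by (simp add: symdiff_eq_empty_iff)
  ultimately consider "card ?Z = 1" | "card ?Z = 2" using two by (metis card_0_eq le_Suc_eq le_zero_eq numeral_2_eq_2 One_nat_def)
  then show ?thesis
  proof cases
    case 1
    then obtain e where e: "?Z = {e}" using card_1_singletonE by blast
    then obtain i where i: "i \<in> K" "e = direction i" using ZK by auto
    then have im: "i < m" using K by auto
    then have "f w = f (orig i)" using e i f_orig by (metis symdiff_eq_iff symdiff_commute)
    then have "w = orig i" using inj_onD[OF inj_on_f _ wG orig_in_G[OF im]] by simp
    then show ?thesis using i orig_in_clique_verts by blast
  next
    case 2
    then obtain e1 e2 where e: "?Z = {e1, e2}" "e1 \<noteq> e2" using card_2_iff by metis
    then obtain i j where ij: "i \<in> K" "e1 = direction i" "j \<in> K" "e2 = direction j" using ZK by auto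
    then have im: "i < m" "j < m" "i \<noteq> j" using K e(2) by auto
    then have "f w = f (subd i j)" using e ij f_subd by (metis symdiff_eq_iff symdiff_commute)
    then have "w = subd i j" using inj_onD[OF inj_on_f _ wG subd_in_G[OF im]] by simp
    then show ?thesis using ij im subd_in_clique_verts by blast
  qed
qed

text \<open>Dropping two distinct coordinates of \<open>label w\<close> exhibits \<open>w\<close> as the middle vertex of a
geodesic between two vertices of \<open>region K\<close> with smaller labels.\<close>

lemma region_middle_of_geodesic:
  assumes K: "K \<subseteq> {0..<m}" and w: "w \<in> region K" and three: "3 \<le> card (symdiff (f w) centre)"
  obtains z z' where "z \<in> region K" "z' \<in> region K"
    "card (symdiff (f z) centre) < card (symdiff (f w) centre)"
    "card (symdiff (f z') centre) < card (symdiff (f w) centre)"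
    "walk_betw G z [z, w, z'] z'" "gdist G z z' = 2"
proof -
  let ?Z = "symdiff (f w) centre"
  have wG: "w \<in> verts G" using w unfolding region_def by simp
  have fZ: "finite ?Z" using finite_f[OF wG] finite_centre by (rule finite_symdiff)
  obtain e0 where e0: "e0 \<in> ?Z" using three by fastforce
  obtain b z where b: "b \<in> ?Z" "b \<noteq> e0" and z: "z \<in> verts G" "(w, z) \<in> arcs G" "symdiff (f z) centre = ?Z - {b}"
    using geodesic_step_down[OF K w e0] three by fastforce
  obtain b' z' where b': "b' \<in> ?Z" "b' \<noteq> b" and z': "z' \<in> verts G" "(w, z') \<in> arcs G" "symdiff (f z') centre = ?Z - {b'}"
    using geodesic_step_down[OF K w b(1)] three by fastforce
  have "symdiff (f z) (f z') = symdiff (?Z - {b}) (?Z - {b'})"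
    using z(3) z'(3) by (metis symdiff_cancel_left symdiff_commute)
  also have "\<dots> = {b, b'}" using b b' unfolding symdiff_def by auto
  finally have "gdist G z z' = 2" using gdist_eq_card_symdiff z(1) z'(1) b' by simp
  moreover have "z \<in> region K" "z' \<in> region K" using z z' w unfolding region_def by auto
  moreover have "card (symdiff (f z) centre) < card ?Z" "card (symdiff (f z') centre) < card ?Z"
    using card_Diff1_less[OF fZ b(1)] card_Diff1_less[OF fZ b'(1)] z(3) z'(3) by simp_all
  moreover have "walk_betw G z [z, w, z'] z'"
    using z z' wG graph unfolding walk_betw_def graph_def by (simp add: walk_Cons_Cons_iff walk_singleton_iff)
  ultimately show ?thesis using that by blast
qed

lemma region_subset_convex:
  assumes K: "K \<subseteq> {0..<m}" and S: "convex_set G S" "clique_verts K \<subseteq> S"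
  shows "region K \<subseteq> S"
proof
  fix w assume "w \<in> region K"
  then show "w \<in> S"
  proof (induction "card (symdiff (f w) centre)" arbitrary: w rule: less_induct)
    case less
    show ?case
    proof (cases "card (symdiff (f w) centre) \<le> 2")
      case True
      then show ?thesis using region_card_le_2_in_clique_verts[OF K less.prems] S(2) by blast
    next
      case False
      then obtain z z' where "z \<in> S" "z' \<in> S" "walk_betw G z [z, w, z'] z'" "gdist G z z' = 2"
        using region_middle_of_geodesic[OF K less.prems] less.hyps by (metis not_less_eq_eq numeral_2_eq_2 numeral_3_eq_3)
      then show ?thesis using S(1) unfolding convex_set_def by fastforce
    qed
  qed
qed

lemma conv_eq_region:
  assumes K: "K \<subseteq> {0..<m}" and H': "verts H' = clique_verts K"
  shows "conv G H' = induced G (region K)"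
proof -
  have "\<Inter>{S. convex_set G S \<and> verts H' \<subseteq> S} = region K"
    using convex_region[OF K] clique_verts_subset_region[OF K] region_subset_convex[OF K] H' by blast
  then show ?thesis unfolding conv_def by simp
qed

lemma verts_H: "verts H = clique_verts {0..<m}"
proof -
  have "verts H = \<phi> ` verts (full_subdiv_K m)" using iso unfolding graph_iso_def bij_betw_def by simp
  then show ?thesis unfolding verts_full_subdiv_K subdiv_verts_def clique_verts_def orig_def subd_def by blast
qed

lemma conv_isomorphic_labels: "isomorphic (conv G H) (induced (hypercube m) labels)"
  using conv_eq_region[OF _ verts_H] graph_iso_label[of "{0..<m}"] graph_iso_isomorphic
  unfolding labels_def by simp

text \<open>A geodesic from \<open>{0..<m}\<close> to \<open>{0..<m} - {i, j}\<close> passes through a co-singleton.\<close>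

lemma labels_cosingleton:
  assumes F: "{0..<m} \<in> labels" and ij: "i < m" "j < m" "i \<noteq> j" and Fij: "{0..<m} - {i, j} \<in> labels"
  shows "{0..<m} - {i} \<in> labels \<or> {0..<m} - {j} \<in> labels"
proof -
  obtain w where w: "w \<in> region {0..<m}" "label w = {0..<m}" using F unfolding labels_def by auto
  obtain u where u: "u \<in> region {0..<m}" "label u = {0..<m} - {i, j}" using Fij unfolding labels_def by auto
  have wG: "w \<in> verts G" "u \<in> verts G" using w u unfolding region_def by auto
  have "symdiff (label w) (label u) = {i, j}" unfolding w(2) u(2) symdiff_def using ij by auto
  then have gd: "gdist G w u = 2" using gdist_eq_card_symdiff_label[OF w(1) u(1)] ij by simp
  obtain p where p: "walk_betw G w p u" "length p = Suc (gdist G w u)"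
    using shortest_walk_exists[OF connected wG] by blast
  then have arc: "(w, p ! 1) \<in> arcs G" and z: "p ! 1 \<in> set p"
    using second_vertex_of_walk[OF p(1)] gd by auto
  have bz: "p ! 1 \<in> region {0..<m}" "label w \<inter> label u \<subseteq> label (p ! 1)" "label (p ! 1) \<subseteq> label w \<union> label u"
    using label_between[OF w(1) u(1) p z] by auto
  have "card (symdiff (label w) (label (p ! 1))) = 1"
    using arc arc_iff_card_symdiff_1 wG bz(1) card_symdiff_f_eq_label[of "{0..<m}" w "p ! 1"] w
    unfolding region_def by auto
  then obtain e where e: "symdiff (label w) (label (p ! 1)) = {e}" using card_1_singletonE by blast
  then have "label (p ! 1) = {0..<m} - {e}" "e \<in> {i, j}" using e w(2) u(2) bz label_subset unfolding symdiff_def by auto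
  moreover have "label (p ! 1) \<in> labels" using bz(1) unfolding labels_def by simp
  ultimately show ?thesis by auto
qed

lemma no_vertex_adjacent_to_three_origs:
  assumes v: "v \<in> verts G" and ijk: "i < m" "j < m" "k < m" "i \<noteq> j" "i \<noteq> k" "j \<noteq> k"
    and arcs: "(v, orig i) \<in> arcs G" "(v, orig j) \<in> arcs G" "(v, orig k) \<in> arcs G"
  shows False
proof -
  have adj: "card (symdiff (symdiff (f v) centre) {direction l}) = 1" if "l < m" "(v, orig l) \<in> arcs G" for l
  proof -
    have "card (symdiff (f v) (f (orig l))) = 1" using arc_iff_card_symdiff_1 that v orig_in_G by blast
    then show ?thesis using f_orig[OF that(1)] by (simp add: symdiff_assoc)
  qed
  have "symdiff (f v) centre = {}"
    using symdiff_adjacent_three_singletons[OF adj[OF ijk(1) arcs(1)] adj[OF ijk(2) arcs(2)] adj[OF ijk(3) arcs(3)]]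
      direction_eq_iff ijk by auto
  then show False using f_ne_centre v by (simp add: symdiff_eq_empty_iff)
qed

definition sub_clique :: "nat set \<Rightarrow> 'a graph" where
  "sub_clique K = induced H (clique_verts K)"

lemma clique_verts_eq_image: "clique_verts K = \<phi> ` subdiv_verts K"
  unfolding subdiv_verts_def clique_verts_def orig_def subd_def by blast

context
  fixes K :: "nat set"
  assumes K: "K \<subseteq> {0..<m}"
begin

lemma clique_verts_subset_H: "clique_verts K \<subseteq> verts H"
  using iso subdiv_verts_mono[OF K] unfolding clique_verts_eq_image graph_iso_def bij_betw_def verts_full_subdiv_K
  by blast

lemma graph_iso_sub_clique:
  assumes s: "bij_betw \<sigma> {0..<card K} K"
  shows "graph_iso (\<phi> \<circ> map_sum \<sigma> ((`) \<sigma>)) (full_subdiv_K (card K)) (sub_clique K)"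
  unfolding graph_iso_def
proof (intro conjI ballI)
  have b1: "bij_betw (map_sum \<sigma> ((`) \<sigma>)) (verts (full_subdiv_K (card K))) (subdiv_verts K)"
    using subdiv_verts_relabel_bij[OF s] verts_full_subdiv_K by simp
  have sub: "subdiv_verts K \<subseteq> verts (full_subdiv_K m)" using subdiv_verts_mono[OF K] verts_full_subdiv_K by simp
  have b2: "bij_betw \<phi> (subdiv_verts K) (clique_verts K)"
    using iso sub unfolding graph_iso_def clique_verts_eq_image bij_betw_def by (meson inj_on_subset)
  show "bij_betw (\<phi> \<circ> map_sum \<sigma> ((`) \<sigma>)) (verts (full_subdiv_K (card K))) (verts (sub_clique K))"
    unfolding sub_clique_def using bij_betw_trans[OF b1 b2] by simp
  fix u v assume u: "u \<in> verts (full_subdiv_K (card K))" and v: "v \<in> verts (full_subdiv_K (card K))"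
  have L: "map_sum \<sigma> ((`) \<sigma>) u \<in> subdiv_verts K" "map_sum \<sigma> ((`) \<sigma>) v \<in> subdiv_verts K"
    using b1 u v unfolding bij_betw_def by auto
  have "(u, v) \<in> arcs (full_subdiv_K (card K)) \<longleftrightarrow>
      (map_sum \<sigma> ((`) \<sigma>) u, map_sum \<sigma> ((`) \<sigma>) v) \<in> arcs (full_subdiv_K m)"
    by (rule full_subdiv_K_relabel_arcs_iff[OF s K u v])
  also have "\<dots> \<longleftrightarrow> ((\<phi> \<circ> map_sum \<sigma> ((`) \<sigma>)) u, (\<phi> \<circ> map_sum \<sigma> ((`) \<sigma>)) v) \<in> arcs H"
    using iso L sub unfolding graph_iso_def by auto
  also have "\<dots> \<longleftrightarrow> ((\<phi> \<circ> map_sum \<sigma> ((`) \<sigma>)) u, (\<phi> \<circ> map_sum \<sigma> ((`) \<sigma>)) v) \<in> arcs (sub_clique K)"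
    using L unfolding sub_clique_def induced_def clique_verts_eq_image by auto
  finally show "(u, v) \<in> arcs (full_subdiv_K (card K)) \<longleftrightarrow>
    ((\<phi> \<circ> map_sum \<sigma> ((`) \<sigma>)) u, (\<phi> \<circ> map_sum \<sigma> ((`) \<sigma>)) v) \<in> arcs (sub_clique K)" .
qed

lemma sub_clique_subgraph: "subgraph (sub_clique K) H"
  unfolding subgraph_def sub_clique_def induced_def using graph_induced[OF H_subgraph(1)] clique_verts_subset_H
  by (auto simp: induced_def)

lemma sub_clique_proper: "K \<noteq> {0..<m} \<Longrightarrow> sub_clique K \<noteq> H"
proof
  assume Kn: "K \<noteq> {0..<m}" and e: "sub_clique K = H"
  then have "\<not> {0..<m} \<subseteq> K" using K by auto
  then obtain j where "j \<in> {0..<m}" "j \<notin> K" by blast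
  then have j: "j < m" "j \<notin> K" by auto
  have "orig j \<in> verts (sub_clique K)" unfolding e using orig_in_H[OF j(1)] .
  then have "\<phi> (Inl j) \<in> \<phi> ` subdiv_verts K" unfolding sub_clique_def clique_verts_eq_image orig_def by simp
  then obtain w where w: "w \<in> subdiv_verts K" "\<phi> w = \<phi> (Inl j)" by (auto simp: image_iff)
  have "inj_on \<phi> (verts (full_subdiv_K m))" using iso unfolding graph_iso_def bij_betw_def by simp
  moreover have "w \<in> verts (full_subdiv_K m)" using w(1) subdiv_verts_mono[OF K] verts_full_subdiv_K by blast
  moreover have "Inl j \<in> verts (full_subdiv_K m)" using j full_subdiv_K_Inl_iff by simp
  ultimately have "w = Inl j" using w(2) by (simp add: inj_on_eq_iff)
  then show False using w(1) j unfolding subdiv_verts_def by auto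
qed

lemma arc_orig_subd_sub_clique:
  assumes ij: "i \<in> K" "j \<in> K" "i \<noteq> j"
  shows "(orig i, subd i j) \<in> arcs (sub_clique K) \<and> (subd i j, orig i) \<in> arcs (sub_clique K)"
proof -
  have "i < m" "j < m" using ij K by auto
  then show ?thesis using arc_orig_subd_H[of i j] ij orig_in_clique_verts subd_in_clique_verts
    unfolding sub_clique_def induced_def by auto
qed

lemma walk_orig_subd_sub_clique:
  "i \<in> K \<Longrightarrow> j \<in> K \<Longrightarrow> i \<noteq> j \<Longrightarrow> walk_betw (sub_clique K) (orig i) [orig i, subd i j] (subd i j)"
  "i \<in> K \<Longrightarrow> j \<in> K \<Longrightarrow> i \<noteq> j \<Longrightarrow> walk_betw (sub_clique K) (subd i j) [subd i j, orig i] (orig i)"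
  unfolding walk_betw_def using arc_orig_subd_sub_clique orig_in_clique_verts subd_in_clique_verts
  unfolding sub_clique_def by (auto simp: walk_Cons_Cons_iff walk_singleton_iff)

lemma walk_orig_orig_sub_clique:
  assumes ij: "i \<in> K" "j \<in> K" "i \<noteq> j"
  shows "walk_betw (sub_clique K) (orig i) [orig i, subd i j, orig j] (orig j)"
proof -
  have "walk_betw (sub_clique K) (subd i j) [subd i j, orig j] (orig j)"
    using walk_orig_subd_sub_clique(2)[of j i] ij subd_commute by simp
  from walk_betw_append[OF walk_orig_subd_sub_clique(1)[OF ij] this] show ?thesis by simp
qed

text \<open>The distances in \<open>G\<close> between vertices of the subdivided clique are read off their labels;
the walks below realise them inside \<open>sub_clique K\<close>.\<close>

lemma short_walk_orig_orig:
  assumes "i \<in> K" "i' \<in> K"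
  shows "\<exists>p. walk_betw (sub_clique K) (orig i) p (orig i') \<and> length p \<le> Suc (gdist G (orig i) (orig i'))"
proof (cases "i = i'")
  case True
  have "walk_betw (sub_clique K) (orig i) [orig i] (orig i)"
    using orig_in_clique_verts assms unfolding walk_betw_def sub_clique_def by (simp add: walk_singleton_iff)
  then show ?thesis using True by fastforce
next
  case False
  have m: "i < m" "i' < m" using assms K by auto
  have "symdiff {i} {i'} = {i, i'}" using False unfolding symdiff_def by auto
  then have "gdist G (orig i) (orig i') = 2"
    using gdist_eq_card_symdiff_label[OF orig_in_region[OF m(1)] orig_in_region[OF m(2)]] label_orig m False
    by simp
  then show ?thesis using walk_orig_orig_sub_clique[OF assms False] by fastforce
qed

lemma short_walk_orig_subd:
  assumes a: "i \<in> K" "j \<in> K" "l \<in> K" "j \<noteq> l"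
  shows "\<exists>p. walk_betw (sub_clique K) (orig i) p (subd j l) \<and> length p \<le> Suc (gdist G (orig i) (subd j l))"
proof -
  have m: "i < m" "j < m" "l < m" using a K by auto
  have gd: "gdist G (orig i) (subd j l) = card (symdiff {i} {j, l})"
    using gdist_eq_card_symdiff_label[OF orig_in_region subd_in_region] label_orig label_subd m a(4) by simp
  consider "i = j" | "i = l" | "i \<noteq> j" "i \<noteq> l" by blast
  then show ?thesis
  proof cases
    case 1 then show ?thesis using walk_orig_subd_sub_clique(1)[of j l] a gd unfolding symdiff_def by fastforce
  next
    case 2
    then show ?thesis using walk_orig_subd_sub_clique(1)[of l j] a gd subd_commute[of j l]
      unfolding symdiff_def by fastforce
  next
    case 3
    have "walk_betw (sub_clique K) (orig i) ([orig i, subd i j, orig j] @ tl [orig j, subd j l]) (subd j l)"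
      using walk_betw_append[OF walk_orig_orig_sub_clique[of i j] walk_orig_subd_sub_clique(1)[of j l]] a 3 by simp
    moreover have "gdist G (orig i) (subd j l) = 3" using gd 3 a unfolding symdiff_def by auto
    ultimately show ?thesis by fastforce
  qed
qed

lemma short_walk_subd_subd:
  assumes a: "i \<in> K" "j \<in> K" "i \<noteq> j" "k \<in> K" "l \<in> K" "k \<noteq> l"
  shows "\<exists>p. walk_betw (sub_clique K) (subd i j) p (subd k l) \<and> length p \<le> Suc (gdist G (subd i j) (subd k l))"
proof -
  have m: "i < m" "j < m" "k < m" "l < m" using a K by auto
  have gd: "gdist G (subd i j) (subd k l) = card (symdiff {i, j} {k, l})"
    using gdist_eq_card_symdiff_label[OF subd_in_region subd_in_region] label_subd m a(3,6) by simp
  show ?thesis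
  proof (cases "{i, j} = {k, l}")
    case True
    then have "subd i j = subd k l" unfolding subd_def by simp
    moreover have "walk_betw (sub_clique K) (subd i j) [subd i j] (subd i j)"
      using subd_in_clique_verts a unfolding walk_betw_def sub_clique_def by (simp add: walk_singleton_iff)
    ultimately show ?thesis by fastforce
  next
    case False
    show ?thesis
    proof (cases "{i, j} \<inter> {k, l} = {}")
      case True
      then have "j \<noteq> k" by auto
      have w1: "walk_betw (sub_clique K) (subd i j) [subd i j, orig j] (orig j)"
        using walk_orig_subd_sub_clique(2)[of j i] a subd_commute by simp
      have w12: "walk_betw (sub_clique K) (subd i j) ([subd i j, orig j] @ tl [orig j, subd j k, orig k]) (orig k)"
        using walk_betw_append[OF w1 walk_orig_orig_sub_clique[of j k]] a \<open>j \<noteq> k\<close> by simp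
      have w: "walk_betw (sub_clique K) (subd i j)
          (([subd i j, orig j] @ tl [orig j, subd j k, orig k]) @ tl [orig k, subd k l]) (subd k l)"
        using walk_betw_append[OF w12 walk_orig_subd_sub_clique(1)[of k l]] a by simp
      have "symdiff {i, j} {k, l} = {i, j, k, l}" using True unfolding symdiff_def by auto
      then have "gdist G (subd i j) (subd k l) = 4" using gd True a by auto
      then show ?thesis using w by fastforce
    next
      case False
      then obtain t where t: "t \<in> {i, j}" "t \<in> {k, l}" by blast
      obtain j' where j': "{i, j} = {t, j'}" "t \<noteq> j'" "j' \<in> K" using t a by auto
      obtain l' where l': "{k, l} = {t, l'}" "t \<noteq> l'" "l' \<in> K" using t a by auto
      have "j' \<noteq> l'" using j' l' \<open>{i, j} \<noteq> {k, l}\<close> by auto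
      have tK: "t \<in> K" using t a by auto
      have e: "subd i j = subd t j'" "subd k l = subd t l'" unfolding subd_def using j' l' by auto
      have w: "walk_betw (sub_clique K) (subd t j') ([subd t j', orig t] @ tl [orig t, subd t l']) (subd t l')"
        using walk_betw_append[OF walk_orig_subd_sub_clique(2)[of t j'] walk_orig_subd_sub_clique(1)[of t l']]
          tK j' l' by simp
      have "symdiff {t, j'} {t, l'} = {j', l'}" using j' l' \<open>j' \<noteq> l'\<close> unfolding symdiff_def by auto
      then have "gdist G (subd i j) (subd k l) = 2" using gd j' l' \<open>j' \<noteq> l'\<close> by simp
      then show ?thesis using w e by fastforce
    qed
  qed
qed

lemma short_walk_sub_clique:
  assumes u: "u \<in> clique_verts K" and v: "v \<in> clique_verts K"
  shows "\<exists>p. walk_betw (sub_clique K) u p v \<and> length p \<le> Suc (gdist G u v)"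
proof -
  have R: "u \<in> region {0..<m}" "v \<in> region {0..<m}"
    using u v clique_verts_subset_region[OF K] region_mono[OF K] by auto
  have sym: "gdist G v u = gdist G u v"
    using gdist_eq_card_symdiff_label[OF R(1,2)] gdist_eq_card_symdiff_label[OF R(2,1)]
    by (simp add: symdiff_commute)
  have graph: "graph (sub_clique K)" unfolding sub_clique_def by (rule graph_induced[OF H_subgraph(1)])
  consider i where "i \<in> K" "u = orig i" | i j where "i \<in> K" "j \<in> K" "i \<noteq> j" "u = subd i j"
    using u unfolding clique_verts_def by blast
  then show ?thesis
  proof cases
    case U: 1
    consider i' where "i' \<in> K" "v = orig i'" | i' j' where "i' \<in> K" "j' \<in> K" "i' \<noteq> j'" "v = subd i' j'"
      using v unfolding clique_verts_def by blast
    then show ?thesis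
    proof cases
      case 1 then show ?thesis using short_walk_orig_orig U by blast
    next
      case 2 then show ?thesis using short_walk_orig_subd U by blast
    qed
  next
    case U: 2
    consider i' where "i' \<in> K" "v = orig i'" | i' j' where "i' \<in> K" "j' \<in> K" "i' \<noteq> j'" "v = subd i' j'"
      using v unfolding clique_verts_def by blast
    then show ?thesis
    proof cases
      case 1
      then obtain p where "walk_betw (sub_clique K) v p u" "length p \<le> Suc (gdist G v u)"
        using short_walk_orig_subd U by blast
      then show ?thesis using walk_betw_rev[OF graph] sym by fastforce
    next
      case 2 then show ?thesis using short_walk_subd_subd U by blast
    qed
  qed
qed

lemma sub_clique_isometric: "isometric_subgraph (sub_clique K) G"
  unfolding isometric_subgraph_def
proof (intro conjI ballI)
  have sub: "verts (sub_clique K) \<subseteq> verts G" "arcs (sub_clique K) \<subseteq> arcs G"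
    using sub_clique_subgraph H_subgraph unfolding subgraph_def by auto
  then show "subgraph (sub_clique K) G" using sub_clique_subgraph unfolding subgraph_def by simp
  show conn: "connected_graph (sub_clique K)"
    unfolding connected_graph_def sub_clique_def using short_walk_sub_clique
    by (metis induced_verts sub_clique_def)
  fix u v assume uv: "u \<in> verts (sub_clique K)" "v \<in> verts (sub_clique K)"
  obtain p where p: "walk_betw (sub_clique K) u p v" "length p \<le> Suc (gdist G u v)"
    using short_walk_sub_clique uv unfolding sub_clique_def by auto
  obtain q where q: "walk_betw (sub_clique K) u q v" "length q = Suc (gdist (sub_clique K) u v)"
    using shortest_walk_exists[OF conn uv] by blast
  have "walk_betw G u q v" using q(1) walk_mono[OF sub] unfolding walk_betw_def by blast
  then show "gdist (sub_clique K) u v = gdist G u v"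
    using gdist_le_walk_length[OF p(1)] gdist_le_walk_length q(2) p(2) by fastforce
qed

lemma sub_clique_apex_free:
  assumes s: "bij_betw \<sigma> {0..<card K} K" and three: "3 \<le> card K"
  shows "\<not> (\<exists>v\<in>verts G. \<forall>i<card K. (v, (\<phi> \<circ> map_sum \<sigma> ((`) \<sigma>)) (Inl i)) \<in> arcs G)"
proof
  assume "\<exists>v\<in>verts G. \<forall>i<card K. (v, (\<phi> \<circ> map_sum \<sigma> ((`) \<sigma>)) (Inl i)) \<in> arcs G"
  then obtain v where v: "v \<in> verts G" "\<forall>i<card K. (v, orig (\<sigma> i)) \<in> arcs G" unfolding orig_def by auto
  have inj: "inj_on \<sigma> {0..<card K}" and im: "\<sigma> ` {0..<card K} \<subseteq> {0..<m}" using s K unfolding bij_betw_def by auto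
  have "\<sigma> 0 < m" "\<sigma> 1 < m" "\<sigma> 2 < m" using im three by (auto simp: image_subset_iff)
  moreover have "\<sigma> 0 \<noteq> \<sigma> 1" "\<sigma> 0 \<noteq> \<sigma> 2" "\<sigma> 1 \<noteq> \<sigma> 2"
    using inj_onD[OF inj, of 0 1] inj_onD[OF inj, of 0 2] inj_onD[OF inj, of 1 2] three by auto
  moreover have "(v, orig (\<sigma> 0)) \<in> arcs G" "(v, orig (\<sigma> 1)) \<in> arcs G" "(v, orig (\<sigma> 2)) \<in> arcs G"
    using v(2) three by auto
  ultimately show False using no_vertex_adjacent_to_three_origs[OF v(1)] by blast
qed

end

text \<open>Minimality of \<open>H\<close> applied to the restriction to \<open>K\<close>: it satisfies (a), so it must violate
(b).\<close>

lemma minimal_imp_restriction_Qminus: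
  assumes minimal: "\<forall>H'. subgraph H' H \<and> H' \<noteq> H \<longrightarrow> \<not> good_subdivision G H'"
    and K: "K \<subseteq> {0..<m}" "3 \<le> card K" "K \<noteq> {0..<m}"
  shows "isomorphic (induced (hypercube m) (labels \<inter> Pow K)) (Qminus (card K)) \<or>
         isomorphic (induced (hypercube m) (labels \<inter> Pow K)) (Qminusminus (card K))"
proof -
  obtain \<sigma> where s: "bij_betw \<sigma> {0..<card K} K"
    using ex_bij_betw_nat_finite[of K] K finite_subset by blast
  have "\<not> good_subdivision G (sub_clique K)"
    using minimal sub_clique_subgraph[OF K(1)] sub_clique_proper[OF K(1,3)] by blast
  then have "isomorphic (conv G (sub_clique K)) (Qminus (card K)) \<or>
      isomorphic (conv G (sub_clique K)) (Qminusminus (card K))"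
    using sub_clique_isometric[OF K(1)] graph_iso_sub_clique[OF K(1) s] sub_clique_apex_free[OF K(1) s K(2)]
    unfolding good_subdivision_def cond_ab_def by blast
  moreover have "conv G (sub_clique K) = induced G (region K)"
    using conv_eq_region[OF K(1)] unfolding sub_clique_def by simp
  moreover have "isomorphic (induced (hypercube m) (labels \<inter> Pow K)) (induced G (region K))"
    using graph_iso_label[OF K(1)] label_image_region[OF K(1)] graph_iso_isomorphic isomorphic_sym by metis
  ultimately show ?thesis using isomorphic_trans by metis
qed

text \<open>Take a smallest missing \<open>Y\<close> and \<open>j \<notin> Y\<close>: on \<open>K = Y \<union> {j}\<close> both \<open>{}\<close> and \<open>K - {j}\<close> are
missing, contradicting the previous lemma.\<close>

lemma minimal_imp_small_sets_in_labels:
  assumes minimal: "\<forall>H'. subgraph H' H \<and> H' \<noteq> H \<longrightarrow> \<not> good_subdivision G H'"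
    and Y: "Y \<subseteq> {0..<m}" "Y \<noteq> {}" "card Y + 2 \<le> m"
  shows "Y \<in> labels"
proof (rule ccontr)
  assume "Y \<notin> labels"
  let ?P = "\<lambda>Y. Y \<subseteq> {0..<m} \<and> Y \<noteq> {} \<and> card Y + 2 \<le> m \<and> Y \<notin> labels"
  obtain Y0 where Y0: "?P Y0" and least: "\<forall>Z. ?P Z \<longrightarrow> card Y0 \<le> card Z"
    using ex_has_least_nat[of ?P Y card] Y \<open>Y \<notin> labels\<close> by blast
  have fY0: "finite Y0" using Y0 finite_subset by blast
  have three: "3 \<le> card Y0"
  proof (rule ccontr)
    assume "\<not> 3 \<le> card Y0"
    then have "Y0 \<in> labels" using small_sets_in_labels[of Y0] Y0 by simp
    then show False using Y0 by simp
  qed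
  have "\<not> {0..<m} \<subseteq> Y0" using card_mono[OF fY0, of "{0..<m}"] Y0 by auto
  then obtain j where "j \<in> {0..<m}" "j \<notin> Y0" by blast
  define K where "K = insert j Y0"
  have cK: "card K = Suc (card Y0)" using fY0 \<open>j \<notin> Y0\<close> unfolding K_def by simp
  have K: "K \<subseteq> {0..<m}" "3 \<le> card K" "K \<noteq> {0..<m}" "j \<in> K" "K - {j} = Y0"
    using Y0 \<open>j \<in> {0..<m}\<close> \<open>j \<notin> Y0\<close> cK three unfolding K_def by auto
  have "labels \<inter> Pow K \<subseteq> Pow K - {{}, K - {j}}" using empty_notin_labels Y0 K(5) by auto
  then have "\<not> isomorphic (induced (hypercube m) (labels \<inter> Pow K)) (Qminus (card K))"
    "\<not> isomorphic (induced (hypercube m) (labels \<inter> Pow K)) (Qminusminus (card K))"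
    using cube_subset_missing_cosingleton[OF K(1) _ K(4)] K(2) by auto
  then show False using minimal_imp_restriction_Qminus[OF minimal K(1-3)] by blast
qed

theorem conv_in_Qminus_family:
  assumes minimal: "\<forall>H'. subgraph H' H \<and> H' \<noteq> H \<longrightarrow> \<not> good_subdivision G H'"
    and not_Qminus: "\<not> isomorphic (conv G H) (Qminus m)"
    and not_Qminusminus: "\<not> isomorphic (conv G H) (Qminusminus m)"
  shows "iso_to_Qminus_family (conv G H)"
proof -
  have "isomorphic (induced (hypercube m) labels) (Qminus m)
    \<or> isomorphic (induced (hypercube m) labels) (Qminusminus m)
    \<or> iso_to_Qminus_family (induced (hypercube m) labels)"
  proof (rule cube_subset_classification[OF m_ge_3 labels_subset empty_notin_labels])
    show "Y \<in> labels" if "Y \<subseteq> {0..<m}" "Y \<noteq> {}" "card Y \<le> 2 \<or> card Y + 2 \<le> m" for Y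
      using that small_sets_in_labels minimal_imp_small_sets_in_labels[OF minimal] by blast
    show "{0..<m} - {i} \<in> labels \<or> {0..<m} - {j} \<in> labels"
      if "{0..<m} \<in> labels" "i < m" "j < m" "i \<noteq> j" for i j
    proof (rule labels_cosingleton[OF that])
      obtain k where "k < m" "k \<noteq> i" "k \<noteq> j" using exists_third[OF m_ge_3] by blast
      then have "{0..<m} - {i, j} \<noteq> {}" by auto
      moreover have "card ({0..<m} - {i, j}) + 2 \<le> m" using that by (simp add: card_Diff_subset)
      ultimately show "{0..<m} - {i, j} \<in> labels"
        using minimal_imp_small_sets_in_labels[OF minimal, of "{0..<m} - {i, j}"] by auto
    qed
  qed
  then show ?thesis
    using conv_isomorphic_labels not_Qminus not_Qminusminus isomorphic_trans iso_to_Qminus_family_isomorphic by blast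
qed

end

section \<open>Small cliques\<close>

text \<open>For \<open>m \<le> 2\<close> the hypotheses are contradictory: for \<open>m = 0\<close> and \<open>m = 1\<close> condition (a) forces
\<open>G\<close> to be empty resp. a single vertex, whose hull is \<open>Q\<^sub>m\<^sup>-\<close>, and for \<open>m = 2\<close> the subdivision
vertex is adjacent to both original vertices.\<close>

lemma conv_empty_isomorphic_Qminus_0:
  assumes "verts G = {}" "verts H \<subseteq> verts G"
  shows "isomorphic (conv G H) (Qminus 0)"
proof -
  have "convex_set G {}" unfolding convex_set_def by simp
  then have "verts (conv G H) = {}" using assms unfolding conv_def by auto
  moreover have "verts (Qminus 0) = {}" unfolding Qminus_def by auto
  ultimately show ?thesis unfolding isomorphic_def bij_betw_def by auto
qed

lemma conv_single_vertex_isomorphic_Qminus_1: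
  assumes G: "graph G" "verts G = {x}" and H: "verts H = {x}"
  shows "isomorphic (conv G H) (Qminus 1)"
proof -
  have "convex_set G (verts G)" unfolding convex_set_def walk_betw_def walk_def by auto
  then have "conv G H = induced G {x}" using G H unfolding conv_def by (intro arg_cong[where f = "induced G"]) blast
  moreover have "Pow {0::nat} - {{0}} = {{}}" by (auto simp: subset_singleton_iff)
  then have "Qminus 1 = induced (hypercube 1) {{}}" unfolding Qminus_def by simp
  moreover have "isomorphic (induced G {x}) (induced (hypercube 1) {{}})"
    unfolding isomorphic_def
  proof (intro exI[of _ "\<lambda>_. {}"] conjI ballI)
    show "bij_betw (\<lambda>_. {}) (verts (induced G {x})) (verts (induced (hypercube 1) {{}}))"
      unfolding bij_betw_def by auto
    fix u v assume "u \<in> verts (induced G {x})" "v \<in> verts (induced G {x})"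
    then show "(u, v) \<in> arcs (induced G {x}) \<longleftrightarrow> ({}, {}) \<in> arcs (induced (hypercube 1) {{}})"
      using G(1) unfolding graph_def by (simp add: induced_def hypercube_def)
  qed
  ultimately show ?thesis by simp
qed

lemma connected_no_neighbour_imp_single:
  assumes "graph G" "connected_graph G" "x \<in> verts G" "\<not> (\<exists>v\<in>verts G. (v, x) \<in> arcs G)"
  shows "verts G = {x}"
proof -
  have "v = x" if v: "v \<in> verts G" for v
  proof -
    obtain p where p: "walk_betw G x p v" using assms(2,3) v unfolding connected_graph_def by blast
    show ?thesis
    proof (cases "2 \<le> length p")
      case True
      then have "(x, p ! 1) \<in> arcs G" using second_vertex_of_walk[OF p] by simp
      then show ?thesis using assms(1,4) unfolding graph_def by blast
    next
      case False
      moreover have "0 < length p" using p unfolding walk_betw_def walk_def by simp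
      ultimately have "length p = 1" by linarith
      then obtain z where "p = [z]" by (metis One_nat_def length_0_conv length_Suc_conv)
      then show ?thesis using p unfolding walk_betw_def by auto
    qed
  qed
  then show ?thesis using assms(3) by blast
qed

lemma subdivided_clique_at_least_3:
  assumes G: "graph G" "connected_graph G" and H: "verts H \<subseteq> verts G" "arcs H \<subseteq> arcs G"
    and iso: "graph_iso \<phi> (full_subdiv_K m) H"
    and no_apex: "\<not> (\<exists>x\<in>verts G. \<forall>i<m. (x, \<phi> (Inl i)) \<in> arcs G)"
    and not_Qminus: "\<not> isomorphic (conv G H) (Qminus m)"
  shows "3 \<le> m"
proof (rule ccontr)
  have vH: "verts H = \<phi> ` verts (full_subdiv_K m)" using iso unfolding graph_iso_def bij_betw_def by simp
  assume "\<not> 3 \<le> m"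
  then consider "m = 0" | "m = 1" | "m = 2" by linarith
  then show False
  proof cases
    case 1
    then have "verts G = {}" using no_apex by auto
    then show False using conv_empty_isomorphic_Qminus_0 H not_Qminus 1 by blast
  next
    case 2
    then have "verts (full_subdiv_K m) = {Inl 0}" unfolding full_subdiv_K_def by auto
    then have vH1: "verts H = {\<phi> (Inl 0)}" using vH by simp
    then have "\<phi> (Inl 0) \<in> verts G" using H by auto
    moreover have "\<not> (\<exists>v\<in>verts G. (v, \<phi> (Inl 0)) \<in> arcs G)" using no_apex unfolding 2 by simp
    ultimately have "verts G = {\<phi> (Inl 0)}" by (rule connected_no_neighbour_imp_single[OF G])
    then show False using conv_single_vertex_isomorphic_Qminus_1[OF G(1) _ vH1] not_Qminus 2 by simp
  next
    case 3
    have v: "Inr {0, 1} \<in> verts (full_subdiv_K m)" "Inl 0 \<in> verts (full_subdiv_K m)" "Inl 1 \<in> verts (full_subdiv_K m)"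
      using full_subdiv_K_Inr[of 0 m 1] full_subdiv_K_Inl_iff 3 by auto
    have "(Inr {0, 1}, Inl 0) \<in> arcs (full_subdiv_K m)" "(Inr {0, 1}, Inl 1) \<in> arcs (full_subdiv_K m)"
      using full_subdiv_K_arc[of 0 m 1] full_subdiv_K_arc[of 1 m 0] 3 by (auto simp: insert_commute)
    then have "(\<phi> (Inr {0, 1}), \<phi> (Inl 0)) \<in> arcs H" "(\<phi> (Inr {0, 1}), \<phi> (Inl 1)) \<in> arcs H"
      using iso v unfolding graph_iso_def by blast+
    moreover have "\<phi> (Inr {0, 1}) \<in> verts G" using vH v H by auto
    ultimately have "\<exists>x\<in>verts G. \<forall>i<m. (x, \<phi> (Inl i)) \<in> arcs G" using H 3
      by (intro bexI[of _ "\<phi> (Inr {0, 1})"]) (auto simp: less_Suc_eq numeral_2_eq_2)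
    then show False using no_apex by blast
  qed
qed

theorem mainTheorem17:
  fixes G H :: "'a graph" and m :: nat and \<phi> :: "nat + nat set \<Rightarrow> 'a"
  assumes "partial_cube G"
    and "isometric_subgraph H G"
    and "graph_iso \<phi> (full_subdiv_K m) H"
    and "\<not> (\<exists>x\<in>verts G. \<forall>i<m. (x, \<phi> (Inl i)) \<in> arcs G)"
    and "\<not> isomorphic (conv G H) (Qminus m)"
    and "\<not> isomorphic (conv G H) (Qminusminus m)"
    and "\<forall>H'. subgraph H' H \<and> H' \<noteq> H \<longrightarrow> \<not> good_subdivision G H'"
  shows "iso_to_Qminus_family (conv G H)"
proof -
  obtain f where f: "cube_embedding G f" using partial_cube_imp_cube_embedding[OF assms(1)] .
  have "3 \<le> m"
    using subdivided_clique_at_least_3[OF _ _ _ _ assms(3,4,5)] f assms(2)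
    unfolding cube_embedding_def isometric_subgraph_def subgraph_def by blast
  then have sc: "subdivided_clique G f H m \<phi>"
    using f assms(2,3) unfolding subdivided_clique_def subdivided_clique_axioms_def by simp
  then interpret apex_free_subdivided_clique G f H m \<phi>
    using assms(4) by (intro apex_free_subdivided_clique.intro apex_free_subdivided_clique_axioms.intro)
      (simp_all add: subdivided_clique.orig_def[OF sc])
  show ?thesis using conv_in_Qminus_family assms(5-7) by blast
qed

end
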